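(* Let $(S,\mathcal{S})$ be a measurable space with $\Delta\in\mathcal{S}\otimes\mathcal{S}$ and let $\mathcal{R}\subseteq \mathcal{S}$ be a ring with $\sigma(\mathcal{R})=\mathcal{S}$. Let $\mu:\mathcal{S}\to [0,\infty]$ be a measure which is $\sigma$-finite on $\mathcal{R}$ (i.e. there exist $R_n\in\mathcal{R}$ with $S=\bigcup_n R_n$ and $\mu(R_n)<\infty$) and satisfies $\mu(\{x\})=0$ for all $x\in S$. If $\pi$ is a cr-set satisfying $P(\pi\cap A=\emptyset)=e^{-\mu(A)}$ for all $A\in\mathcal{R}$, then $\pi$ is a Poisson process with intensity $\mu$.
   Context: $\Delta=\{(x,x)\mid x\in S\}$. $(\Omega,\mathcal{F},P)$ is a probability space; $C(S)$ is the set of countable subsets of $S$; $N_A(M)=|A\cap M|$; $\mathcal{C}(\mathcal{S})=\sigma(N_A\mid A\in\mathcal{S})$; a cr-set is an $\mathcal{F}$-$\mathcal{C}(\mathcal{S})$ measurable map $\pi:\Omega\to C(S)$ with law $P_\pi$. A cr-set $\pi$ is a Poisson process with intensity $\mu$ if (under $P_\pi$) $N_{A_1},\dots,N_{A_n}$ are independent for any pairwise disjoint $A_1,\dots,A_n\in\mathcal{S}$, and $N_A(\pi)$ has a Poisson distribution with mean $\mu(A)$ for each $A\in\mathcal{S}$, where $\delta_0$ and $\delta_\infty$ count as Poisson distributions (with means $0$ and $\infty$); the intensity is $\mu(A)=E(N_A(\pi))$. *)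

theory Defs
  imports "HOL-Probability.Probability"
begin

definition Ncount :: "'a set \<Rightarrow> 'a set \<Rightarrow> enat" where
  "Ncount A X = (if finite (A \<inter> X) then enat (card (A \<inter> X)) else \<infinity>)"

definition cr_sets :: "'a measure \<Rightarrow> 'a set set" where
  "cr_sets M = {X. X \<subseteq> space M \<and> countable X}"

text \<open>The measurable space (C(S), sigma(N_A | A in S)). Since each N_A takes values in the
  countable set enat, sigma(N_A) is generated by its level sets.\<close>
definition cr_space :: "'a measure \<Rightarrow> 'a set measure" where
  "cr_space M = sigma (cr_sets M)
     {{X \<in> cr_sets M. Ncount A X = k} | A k. A \<in> sets M}"

definition cr_set :: "'w measure \<Rightarrow> 'a measure \<Rightarrow> ('w \<Rightarrow> 'a set) \<Rightarrow> bool" where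
  "cr_set P M \<pi> \<longleftrightarrow> \<pi> \<in> measurable P (cr_space M)"

definition poisson_law :: "enat measure \<Rightarrow> ennreal \<Rightarrow> bool" where
  "poisson_law Q m \<longleftrightarrow>
     (if m = \<infinity> then measure Q {\<infinity>} = 1
      else (\<forall>k::nat. measure Q {enat k} = exp (- enn2real m) * (enn2real m) ^ k / fact k))"

definition poisson_process :: "'w measure \<Rightarrow> 'a measure \<Rightarrow> ('w \<Rightarrow> 'a set) \<Rightarrow> bool" where
  "poisson_process P M \<pi> \<longleftrightarrow>
     (let P\<pi> = distr P (cr_space M) \<pi> in
      (\<forall>(n::nat) (A::nat \<Rightarrow> 'a set). (\<forall>i<n. A i \<in> sets M) \<and> disjoint_family_on A {..<n} \<longrightarrow>
          prob_space.indep_vars P\<pi> (\<lambda>_. count_space UNIV) (\<lambda>i X. Ncount (A i) X) {..<n}) \<and>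
      (\<forall>A \<in> sets M. poisson_law (distr P\<pi> (count_space UNIV) (Ncount A)) (emeasure M A)))"

definition exp_neg :: "ennreal \<Rightarrow> real" where
  "exp_neg m = (if m = \<infinity> then 0 else exp (- enn2real m))"

end

theory Submission
  imports Defs
begin

text \<open>The points of \<open>S\<close> are separated by a sequence \<open>D\<^sub>0, D\<^sub>1, \<dots>\<close> of
  sets of \<open>R\<close> (it exists because the diagonal is measurable), so \<open>D\<^sub>0, \<dots>, D\<^sub>n\<^sub>-\<^sub>1\<close> cut a set
  \<open>A\<close> into \<open>2\<^sup>n\<close> cells, and the number \<open>h\<^sub>n\<close> of cells met by \<open>\<pi>\<close> increases to \<open>N\<^sub>A(\<pi>)\<close>.
  The void probabilities of unions of cells give \<open>E s ^ h\<^sub>n = \<Prod>\<^sub>C (s + (1 - s) exp (- \<mu> C))\<close>,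
  which tends to \<open>exp (- (1 - s) \<mu> A)\<close> because \<open>\<Sum>\<^sub>C (\<mu> C)\<^sup>2 \<rightarrow> 0\<close>, the diagonal being
  \<open>\<mu> \<Otimes> \<mu>\<close>-null when singletons are null; so \<open>N\<^sub>A\<close> has the generating function of a Poisson
  law. A monotone class argument extends the void probabilities from \<open>R\<close> to all measurable sets,
  and counts in disjoint sets are independent because each is determined by the events of avoiding
  subsets of its set, and these events are independent.\<close>

section \<open>Separating sequences\<close>

definition separates_points :: "'a set \<Rightarrow> (nat \<Rightarrow> 'a set) \<Rightarrow> bool" where
  "separates_points S D \<longleftrightarrow> (\<forall>x\<in>S. \<forall>y\<in>S. (\<forall>j. x \<in> D j \<longleftrightarrow> y \<in> D j) \<longrightarrow> x = y)"

lemma sigma_sets_countable_subgenerator: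
  assumes "X \<in> sigma_sets \<Omega> G"
  shows "\<exists>G'. countable G' \<and> G' \<subseteq> G \<and> X \<in> sigma_sets \<Omega> G'"
  using assms
proof induction
  case (Basic a)
  then show ?case by (intro exI[of _ "{a}"]) auto
next
  case Empty
  then show ?case by (intro exI[of _ "{}"]) (auto intro: sigma_sets.Empty)
next
  case (Compl a)
  then show ?case by (auto intro: sigma_sets.Compl)
next
  case (Union a)
  then obtain G' where G': "\<And>i. countable (G' i) \<and> G' i \<subseteq> G \<and> a i \<in> sigma_sets \<Omega> (G' i)"
    by metis
  then have "a i \<in> sigma_sets \<Omega> (\<Union>i. G' i)" for i
    using sigma_sets_mono'[of "G' i" "\<Union>i. G' i" \<Omega>] by blast
  then show ?case
    using G' by (intro exI[of _ "\<Union>i. G' i"]) (auto intro: sigma_sets.Union)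
qed

lemma sigma_sets_indistinguishable:
  assumes "e \<in> sigma_sets \<Omega> F" "x \<in> \<Omega>" "y \<in> \<Omega>" "\<forall>f\<in>F. x \<in> f \<longleftrightarrow> y \<in> f"
  shows "x \<in> e \<longleftrightarrow> y \<in> e"
  using assms(1) by induction (use assms in auto)

lemma countable_sides_generate_diagonal:
  assumes "{(x, x) | x. x \<in> space M} \<in> sets (M \<Otimes>\<^sub>M M)"
  obtains E where "countable E" "E \<subseteq> sets M"
    "{(x, x) | x. x \<in> space M} \<in> sigma_sets (space M \<times> space M) {a \<times> b | a b. a \<in> E \<and> b \<in> E}"
proof -
  let ?\<Omega> = "space M \<times> space M"
  obtain G where G: "countable G" "G \<subseteq> {a \<times> b | a b. a \<in> sets M \<and> b \<in> sets M}"
    "{(x, x) | x. x \<in> space M} \<in> sigma_sets ?\<Omega> G"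
    using sigma_sets_countable_subgenerator[of _ ?\<Omega> "{a \<times> b | a b. a \<in> sets M \<and> b \<in> sets M}"] assms
    unfolding sets_pair_measure by blast
  have "\<forall>r\<in>G. \<exists>a b. r = a \<times> b \<and> a \<in> sets M \<and> b \<in> sets M" using G(2) by blast
  then obtain fa fb where fab: "\<And>r. r \<in> G \<Longrightarrow> r = fa r \<times> fb r \<and> fa r \<in> sets M \<and> fb r \<in> sets M"
    by metis
  define E where "E = fa ` G \<union> fb ` G"
  have "G \<subseteq> {a \<times> b | a b. a \<in> E \<and> b \<in> E}" unfolding E_def using fab by blast
  then have "{(x, x) | x. x \<in> space M} \<in> sigma_sets ?\<Omega> {a \<times> b | a b. a \<in> E \<and> b \<in> E}"
    using G(3) sigma_sets_mono'[of G _ ?\<Omega>] by blast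
  moreover have "countable E" "E \<subseteq> sets M" unfolding E_def using G(1) fab by auto
  ultimately show ?thesis using that by blast
qed

lemma eq_if_indistinguishable_by_sides:
  assumes "{(x, x) | x. x \<in> \<Omega>} \<in> sigma_sets (\<Omega> \<times> \<Omega>) {a \<times> b | a b. a \<in> E \<and> b \<in> E}"
    and "x \<in> \<Omega>" "y \<in> \<Omega>" "\<forall>e\<in>E. x \<in> e \<longleftrightarrow> y \<in> e"
  shows "x = y"
proof -
  have "\<forall>r\<in>{a \<times> b | a b. a \<in> E \<and> b \<in> E}. (x, x) \<in> r \<longleftrightarrow> (x, y) \<in> r"
    using assms(4) by auto
  then have "(x, x) \<in> {(x, x) | x. x \<in> \<Omega>} \<longleftrightarrow> (x, y) \<in> {(x, x) | x. x \<in> \<Omega>}"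
    using sigma_sets_indistinguishable[OF assms(1), of "(x, x)" "(x, y)"] assms(2,3) by auto
  then show ?thesis using assms(2) by auto
qed

text \<open>Every side of the countably many rectangles generating the diagonal is generated by countably
  many sets of \<open>R\<close>; these are the members of the separating sequence.\<close>

lemma separating_sequence_of_measurable_diagonal:
  assumes diag: "{(x, x) | x. x \<in> space M} \<in> sets (M \<Otimes>\<^sub>M M)"
    and gen: "sigma_sets (space M) R = sets M" and empty: "{} \<in> R"
  shows "\<exists>D. range D \<subseteq> R \<and> separates_points (space M) D"
proof -
  obtain E where E: "countable E" "E \<subseteq> sets M"
    "{(x, x) | x. x \<in> space M} \<in> sigma_sets (space M \<times> space M) {a \<times> b | a b. a \<in> E \<and> b \<in> E}"
    using countable_sides_generate_diagonal[OF diag] by blast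
  have "\<forall>e\<in>E. \<exists>F. countable F \<and> F \<subseteq> R \<and> e \<in> sigma_sets (space M) F"
    using E(2) gen sigma_sets_countable_subgenerator[of _ "space M" R] by blast
  then obtain Fe where Fe: "\<And>e. e \<in> E \<Longrightarrow> countable (Fe e)" "\<And>e. e \<in> E \<Longrightarrow> Fe e \<subseteq> R"
    "\<And>e. e \<in> E \<Longrightarrow> e \<in> sigma_sets (space M) (Fe e)"
    by metis
  define F where "F = insert {} (\<Union>e\<in>E. Fe e)"
  have "countable F" unfolding F_def using E(1) Fe(1) by auto
  show ?thesis
  proof (intro exI[of _ "from_nat_into F"] conjI)
    have "F \<subseteq> R" unfolding F_def using Fe(2) empty by auto
    then show "range (from_nat_into F) \<subseteq> R"
      using range_from_nat_into[OF _ \<open>countable F\<close>] by (simp add: F_def)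
    show "separates_points (space M) (from_nat_into F)"
      unfolding separates_points_def
    proof (intro ballI impI)
      fix x y assume x: "x \<in> space M" and y: "y \<in> space M"
        and xy: "\<forall>j. x \<in> from_nat_into F j \<longleftrightarrow> y \<in> from_nat_into F j"
      have "\<forall>f\<in>F. x \<in> f \<longleftrightarrow> y \<in> f"
        using xy from_nat_into_surj[OF \<open>countable F\<close>] by metis
      moreover have "e \<in> sigma_sets (space M) F" if "e \<in> E" for e
        using Fe(3)[OF that] sigma_sets_mono'[of "Fe e" F "space M"] that unfolding F_def by blast
      ultimately have "\<forall>e\<in>E. x \<in> e \<longleftrightarrow> y \<in> e"
        using sigma_sets_indistinguishable[OF _ x y] by blast
      then show "x = y" by (rule eq_if_indistinguishable_by_sides[OF E(3) x y])
    qed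
  qed
qed

section \<open>Cells and hit counts\<close>

definition cell :: "'a measure \<Rightarrow> (nat \<Rightarrow> 'a set) \<Rightarrow> 'a set \<Rightarrow> bool list \<Rightarrow> 'a set" where
  "cell M D A bs = A \<inter> (\<Inter>j<length bs. if bs!j then D j else space M - D j)"

definition address :: "(nat \<Rightarrow> 'a set) \<Rightarrow> nat \<Rightarrow> 'a \<Rightarrow> bool list" where
  "address D n x = map (\<lambda>j. x \<in> D j) [0..<n]"

definition hits :: "'a measure \<Rightarrow> (nat \<Rightarrow> 'a set) \<Rightarrow> 'a set \<Rightarrow> nat \<Rightarrow> 'a set \<Rightarrow> nat" where
  "hits M D A n X = card {bs. length bs = n \<and> X \<inter> cell M D A bs \<noteq> {}}"

lemma finite_lists_length_eq_bool: "finite {bs :: bool list. length bs = n}"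
  using finite_lists_length_eq[of "UNIV :: bool set" n] by simp

lemma mem_cell:
  "x \<in> cell M D A bs \<longleftrightarrow> x \<in> A \<and> (\<forall>j<length bs. if bs!j then x \<in> D j else x \<in> space M \<and> x \<notin> D j)"
  unfolding cell_def by (auto split: if_splits)

lemma cell_subset: "cell M D A bs \<subseteq> A"
  by (simp add: subset_iff mem_cell)

lemma cell_Nil [simp]: "cell M D A [] = A"
  unfolding cell_def by simp

lemma mem_cell_iff_nth:
  assumes "x \<in> cell M D A bs" "j < length bs"
  shows "x \<in> D j \<longleftrightarrow> bs!j"
  using assms by (auto simp: mem_cell split: if_splits)

lemma cell_snoc:
  assumes "A \<subseteq> space M"
  shows "cell M D A (bs @ [c]) = (if c then cell M D A bs \<inter> D (length bs) else cell M D A bs - D (length bs))"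
  using assms cell_subset[of M D A bs]
  by (auto simp: mem_cell nth_append less_Suc_eq)

lemma cell_split:
  assumes "A \<subseteq> space M"
  shows "cell M D A bs = cell M D A (bs @ [True]) \<union> cell M D A (bs @ [False])"
  by (auto simp: cell_snoc[OF assms])

lemma disjoint_family_on_cell: "disjoint_family_on (cell M D A) {bs. length bs = n}"
  unfolding disjoint_family_on_def
proof (intro ballI impI)
  fix bs cs :: "bool list"
  assume "bs \<in> {bs. length bs = n}" "cs \<in> {bs. length bs = n}" "bs \<noteq> cs"
  then obtain j where j: "j < n" "bs!j \<noteq> cs!j" "length bs = n" "length cs = n"
    using nth_equalityI by force
  then show "cell M D A bs \<inter> cell M D A cs = {}"
    using mem_cell_iff_nth[of _ M D A bs j] mem_cell_iff_nth[of _ M D A cs j] by auto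
qed

lemma mem_cell_address:
  assumes "x \<in> A" "A \<subseteq> space M"
  shows "x \<in> cell M D A (address D n x)"
  using assms unfolding mem_cell address_def by auto

lemma UN_cell:
  assumes "A \<subseteq> space M"
  shows "(\<Union>bs\<in>{bs. length bs = n}. cell M D A bs) = A"
proof (intro equalityI subsetI)
  fix x assume "x \<in> A"
  then have "x \<in> cell M D A (address D n x)" "length (address D n x) = n"
    using mem_cell_address[OF _ assms] by (auto simp: address_def)
  then show "x \<in> (\<Union>bs\<in>{bs. length bs = n}. cell M D A bs)" by blast
qed (use cell_subset[of M D A] in auto)

lemma cell_in_ring:
  assumes K: "ring_of_sets (space M) K" "range D \<subseteq> K" and A: "A \<in> K"
  shows "cell M D A bs \<in> K"
proof (induction bs rule: rev_induct)
  case (snoc c bs)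
  interpret ring_of_sets "space M" K by fact
  have "A \<subseteq> space M" "D (length bs) \<in> K" using A K(2) sets_into_space by auto
  then show ?case using snoc by (cases c) (auto simp: cell_snoc)
qed (use A in simp)

lemma cell_in_sets: "A \<in> sets M \<Longrightarrow> range D \<subseteq> sets M \<Longrightarrow> cell M D A bs \<in> sets M"
  by (rule cell_in_ring[OF sets.ring_of_sets_axioms])

lemma sum_emeasure_cell:
  assumes "A \<in> sets M" "range D \<subseteq> sets M"
  shows "(\<Sum>bs\<in>{bs. length bs = n}. emeasure M (cell M D A bs)) = emeasure M A"
proof -
  have "(\<Sum>bs\<in>{bs. length bs = n}. emeasure M (cell M D A bs))
      = emeasure M (\<Union>bs\<in>{bs. length bs = n}. cell M D A bs)"
    using cell_in_sets[OF assms] disjoint_family_on_cell[of M D A n]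
    by (intro sum_emeasure) (auto simp: finite_lists_length_eq_bool)
  then show ?thesis using UN_cell[OF sets.sets_into_space[OF assms(1)]] by simp
qed

lemma finite_hits_set: "finite {bs. length bs = n \<and> X \<inter> cell M D A bs \<noteq> {}}"
  by (rule finite_subset[OF _ finite_lists_length_eq_bool[of n]]) auto

lemma incseq_hits:
  assumes "A \<subseteq> space M"
  shows "incseq (\<lambda>n. hits M D A n X)"
proof (rule incseq_SucI)
  fix n
  define ext where "ext bs = (if X \<inter> cell M D A (bs @ [True]) \<noteq> {} then bs @ [True] else bs @ [False])" for bs
  have "inj_on ext S" for S unfolding ext_def inj_on_def by auto
  moreover have "ext ` {bs. length bs = n \<and> X \<inter> cell M D A bs \<noteq> {}}
      \<subseteq> {bs. length bs = Suc n \<and> X \<inter> cell M D A bs \<noteq> {}}"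
  proof (intro image_subsetI CollectI conjI)
    fix bs assume bs: "bs \<in> {bs. length bs = n \<and> X \<inter> cell M D A bs \<noteq> {}}"
    then show "length (ext bs) = Suc n" unfolding ext_def by simp
    show "X \<inter> cell M D A (ext bs) \<noteq> {}"
    proof (cases "X \<inter> cell M D A (bs @ [True]) = {}")
      case True
      then show ?thesis using bs cell_split[OF assms, of D bs] unfolding ext_def by auto
    qed (simp add: ext_def)
  qed
  ultimately show "hits M D A n X \<le> hits M D A (Suc n) X"
    unfolding hits_def by (rule card_inj_on_le[OF _ _ finite_hits_set])
qed

text \<open>Distinct hit cells are disjoint, so choosing a point of \<open>X\<close> in each is injective.\<close>

lemma hits_le_card:
  assumes "finite (X \<inter> A)"
  shows "hits M D A n X \<le> card (X \<inter> A)"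
proof -
  let ?H = "{bs. length bs = n \<and> X \<inter> cell M D A bs \<noteq> {}}"
  define pt where "pt bs = (SOME x. x \<in> X \<inter> cell M D A bs)" for bs
  have pt: "pt bs \<in> X \<inter> cell M D A bs" if "bs \<in> ?H" for bs
  proof -
    have "\<exists>x. x \<in> X \<inter> cell M D A bs" using that by auto
    then show ?thesis unfolding pt_def by (rule someI_ex)
  qed
  have "inj_on pt ?H"
  proof (rule inj_onI, rule ccontr)
    fix bs cs assume bs: "bs \<in> ?H" and cs: "cs \<in> ?H" and "pt bs = pt cs" "bs \<noteq> cs"
    then have "cell M D A bs \<inter> cell M D A cs = {}"
      using disjoint_family_on_cell[of M D A n] unfolding disjoint_family_on_def by auto
    then show False using pt[OF bs] pt[OF cs] \<open>pt bs = pt cs\<close> by auto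
  qed
  moreover have "pt ` ?H \<subseteq> X \<inter> A"
    using pt cell_subset[of M D A] by (meson Int_mono image_subsetI order_refl subsetD)
  ultimately show ?thesis unfolding hits_def by (rule card_inj_on_le[OF _ _ assms])
qed

lemma hits_le_Ncount: "enat (hits M D A n X) \<le> Ncount A X"
  unfolding Ncount_def using hits_le_card[of X A M D n] by (auto simp: Int_commute)

lemma inj_on_address:
  assumes "separates_points (space M) D" "finite F" "F \<subseteq> space M"
  shows "\<exists>n. inj_on (address D n) F"
proof -
  have "\<exists>j. (x \<in> D j) \<noteq> (y \<in> D j)" if "x \<in> F" "y \<in> F" "x \<noteq> y" for x y
    using assms(1,3) that unfolding separates_points_def by (meson subsetD)
  then obtain js where js: "\<And>x y. x \<in> F \<Longrightarrow> y \<in> F \<Longrightarrow> x \<noteq> y \<Longrightarrow> (x \<in> D (js x y)) \<noteq> (y \<in> D (js x y))"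
    by metis
  define n where "n = Suc (\<Sum>(x, y)\<in>F \<times> F. js x y)"
  have jn: "js x y < n" if "x \<in> F" "y \<in> F" for x y
    using member_le_sum[of "(x, y)" "F \<times> F" "\<lambda>(x, y). js x y"] that assms(2) by (auto simp: n_def)
  have nth: "address D n x ! j = (x \<in> D j)" if "j < n" for x j
    using that by (simp add: address_def)
  have "inj_on (address D n) F"
  proof (rule inj_onI, rule ccontr)
    fix x y assume x: "x \<in> F" and y: "y \<in> F" and eq: "address D n x = address D n y" and "x \<noteq> y"
    have "(x \<in> D (js x y)) = (y \<in> D (js x y))"
      using nth[OF jn[OF x y], of x] nth[OF jn[OF x y], of y] eq by simp
    then show False using js[OF x y \<open>x \<noteq> y\<close>] by simp
  qed
  then show ?thesis ..
qed

lemma card_le_hits: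
  assumes "separates_points (space M) D" "finite F" "F \<subseteq> X \<inter> A" "A \<subseteq> space M"
  shows "\<exists>n. card F \<le> hits M D A n X"
proof -
  obtain n where inj: "inj_on (address D n) F"
    using inj_on_address[OF assms(1,2)] assms(3,4) by blast
  have "address D n ` F \<subseteq> {bs. length bs = n \<and> X \<inter> cell M D A bs \<noteq> {}}"
    using mem_cell_address[OF _ assms(4), of _ D n] assms(3) by (auto simp: address_def)
  then have "card F \<le> hits M D A n X"
    unfolding hits_def by (rule card_inj_on_le[OF inj _ finite_hits_set])
  then show ?thesis ..
qed

lemma enat_le_Ncount_iff_hits:
  assumes "separates_points (space M) D" "A \<subseteq> space M"
  shows "enat k \<le> Ncount A X \<longleftrightarrow> (\<exists>n. k \<le> hits M D A n X)"
proof
  assume k: "enat k \<le> Ncount A X"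
  obtain F where "finite F" "card F = k" "F \<subseteq> X \<inter> A"
  proof (cases "finite (A \<inter> X)")
    case True
    with k have "k \<le> card (X \<inter> A)" unfolding Ncount_def by (simp add: Int_commute)
    then obtain F where "F \<subseteq> X \<inter> A" "card F = k"
      by (rule obtain_subset_with_card_n)
    then show ?thesis using that True by (simp add: Int_commute finite_subset)
  next
    case False
    then show ?thesis using that infinite_arbitrarily_large[of "X \<inter> A" k] by (auto simp: Int_commute)
  qed
  then show "\<exists>n. k \<le> hits M D A n X" using card_le_hits[OF assms(1) _ _ assms(2)] by blast
next
  assume "\<exists>n. k \<le> hits M D A n X"
  then obtain n where "enat k \<le> enat (hits M D A n X)" by auto
  then show "enat k \<le> Ncount A X" using hits_le_Ncount by (rule order_trans)
qed

lemma Ncount_le_enat_iff_hits: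
  assumes "separates_points (space M) D" "A \<subseteq> space M"
  shows "Ncount A X \<le> enat k \<longleftrightarrow> (\<forall>n. hits M D A n X \<le> k)"
proof -
  have "\<not> Ncount A X \<le> enat k \<longleftrightarrow> enat (Suc k) \<le> Ncount A X"
    by (cases "Ncount A X") auto
  also have "\<dots> \<longleftrightarrow> (\<exists>n. \<not> hits M D A n X \<le> k)"
    using enat_le_Ncount_iff_hits[OF assms, of "Suc k" X] by (simp add: not_le Suc_le_eq)
  finally show ?thesis by blast
qed

lemma Ncount_eq_infinity_iff_hits:
  assumes "separates_points (space M) D" "A \<subseteq> space M"
  shows "Ncount A X = \<infinity> \<longleftrightarrow> (\<forall>k. \<exists>n. k \<le> hits M D A n X)"
proof -
  have "Ncount A X = \<infinity> \<longleftrightarrow> (\<forall>k. enat k \<le> Ncount A X)"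
  proof (cases "Ncount A X")
    case (enat j)
    then show ?thesis using Suc_n_not_le_n[of j] by (auto intro!: exI[of _ "Suc j"])
  qed simp
  then show ?thesis using enat_le_Ncount_iff_hits[OF assms] by simp
qed

lemma emeasure_pair_measure_diagonal_eq_0:
  assumes "sigma_finite_measure M" and diag: "{(x, x) | x. x \<in> space M} \<in> sets (M \<Otimes>\<^sub>M M)"
    and null: "\<And>x. x \<in> space M \<Longrightarrow> emeasure M {x} = 0"
  shows "emeasure (M \<Otimes>\<^sub>M M) {(x, x) | x. x \<in> space M} = 0"
proof -
  interpret sigma_finite_measure M by fact
  have "emeasure (M \<Otimes>\<^sub>M M) {(x, x) | x. x \<in> space M}
      = (\<integral>\<^sup>+x. emeasure M (Pair x -` {(x, x) | x. x \<in> space M}) \<partial>M)"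
    by (rule emeasure_pair_measure_alt[OF diag])
  also have "\<dots> = (\<integral>\<^sup>+x. 0 \<partial>M)"
  proof (rule nn_integral_cong)
    fix x assume "x \<in> space M"
    moreover have "Pair x -` {(x, x) | x. x \<in> space M} = {x}" using \<open>x \<in> space M\<close> by auto
    ultimately show "emeasure M (Pair x -` {(x, x) | x. x \<in> space M}) = 0" using null by simp
  qed
  finally show ?thesis by simp
qed

abbreviation cell_squares :: "'a measure \<Rightarrow> (nat \<Rightarrow> 'a set) \<Rightarrow> 'a set \<Rightarrow> nat \<Rightarrow> ('a \<times> 'a) set" where
  "cell_squares M D A n \<equiv> \<Union>bs\<in>{bs. length bs = n}. cell M D A bs \<times> cell M D A bs"

lemma decseq_cell_squares:
  assumes "A \<subseteq> space M"
  shows "decseq (cell_squares M D A)"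
proof (rule decseq_SucI, rule subsetI)
  fix n p assume "p \<in> cell_squares M D A (Suc n)"
  then obtain bs c where "length bs = n" "p \<in> cell M D A (bs @ [c]) \<times> cell M D A (bs @ [c])"
    by (auto simp: length_Suc_conv_rev)
  moreover have "cell M D A (bs @ [c]) \<subseteq> cell M D A bs"
    using cell_split[OF assms, of D bs] by (cases c) auto
  ultimately show "p \<in> cell_squares M D A n" by auto
qed

lemma INT_cell_squares_subset_diagonal:
  assumes "separates_points (space M) D" "A \<subseteq> space M"
  shows "(\<Inter>n. cell_squares M D A n) \<subseteq> {(x, x) | x. x \<in> space M}"
proof (rule subsetI, clarify)
  fix x y assume xy: "(x, y) \<in> (\<Inter>n. cell_squares M D A n)"
  have "x \<in> D j \<longleftrightarrow> y \<in> D j" for j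
  proof -
    from xy obtain bs where "length bs = Suc j" "x \<in> cell M D A bs" "y \<in> cell M D A bs" by blast
    then show ?thesis using mem_cell_iff_nth[of _ M D A bs j] by auto
  qed
  moreover from xy have "x \<in> A" "y \<in> A" using cell_subset[of M D A] by blast+
  ultimately show "\<exists>z. (x, y) = (z, z) \<and> z \<in> space M"
    using assms unfolding separates_points_def by blast
qed

lemma finite_measure_density_indicator:
  "A \<in> sets M \<Longrightarrow> emeasure M A < \<infinity> \<Longrightarrow> finite_measure (density M (indicator A))"
  by (rule finite_measureI) (simp add: emeasure_restricted Int_absorb2 sets.sets_into_space)

lemma emeasure_density_cell_squares:
  assumes A: "A \<in> sets M" "emeasure M A < \<infinity>" and D: "range D \<subseteq> sets M"
  shows "emeasure (density M (indicator A) \<Otimes>\<^sub>M density M (indicator A)) (cell_squares M D A n)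
    = (\<Sum>bs\<in>{bs. length bs = n}. emeasure M (cell M D A bs) ^ 2)"
proof -
  define MA where "MA = density M (indicator A)"
  interpret MA: finite_measure MA
    unfolding MA_def by (rule finite_measure_density_indicator[OF A])
  have cell_M: "cell M D A bs \<in> sets M" for bs using cell_in_sets[OF A(1) D] .
  have sets_MA: "sets MA = sets M" unfolding MA_def by simp
  have "emeasure (MA \<Otimes>\<^sub>M MA) (cell_squares M D A n)
      = (\<Sum>bs\<in>{bs. length bs = n}. emeasure (MA \<Otimes>\<^sub>M MA) (cell M D A bs \<times> cell M D A bs))"
    using cell_M disjoint_family_on_cell[of M D A n]
    by (intro sum_emeasure[symmetric])
      (auto simp: sets_pair_measure_cong[OF sets_MA sets_MA] finite_lists_length_eq_bool disjoint_family_on_def)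
  moreover have "emeasure MA (cell M D A bs) = emeasure M (cell M D A bs)" for bs
    using cell_M[of bs] cell_subset[of M D A bs]
    by (simp add: MA_def emeasure_restricted[OF A(1)] Int_absorb1)
  ultimately have "emeasure (MA \<Otimes>\<^sub>M MA) (cell_squares M D A n)
      = (\<Sum>bs\<in>{bs. length bs = n}. emeasure M (cell M D A bs) ^ 2)"
    using cell_M by (simp add: MA.emeasure_pair_measure_Times sets_MA power2_eq_square)
  then show ?thesis unfolding MA_def .
qed

text \<open>The sum is the \<open>\<mu>|\<^sub>A \<Otimes> \<mu>|\<^sub>A\<close>-measure of the union of the squares of the cells of level
  \<open>n\<close>; these unions decrease to a subset of the diagonal, which is null as singletons are null.\<close>

lemma sum_squared_cell_measures_tendsto_0:
  assumes diag: "{(x, x) | x. x \<in> space M} \<in> sets (M \<Otimes>\<^sub>M M)"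
    and null: "\<forall>x \<in> space M. emeasure M {x} = 0"
    and D: "range D \<subseteq> sets M" "separates_points (space M) D"
    and A: "A \<in> sets M" "emeasure M A < \<infinity>"
  shows "(\<lambda>n. \<Sum>bs\<in>{bs. length bs = n}. (enn2real (emeasure M (cell M D A bs)))\<^sup>2) \<longlonglongrightarrow> 0"
proof -
  define MA where "MA = density M (indicator A)"
  define B where "B n = {bs :: bool list. length bs = n}" for n
  let ?T = "cell_squares M D A"
  interpret MA: finite_measure MA
    unfolding MA_def by (rule finite_measure_density_indicator[OF A])
  have sets_MA2: "sets (MA \<Otimes>\<^sub>M MA) = sets (M \<Otimes>\<^sub>M M)"
    by (intro sets_pair_measure_cong) (simp_all add: MA_def)
  have cell_fin: "emeasure M (cell M D A bs) < \<infinity>" for bs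
    using emeasure_mono[OF cell_subset A(1)] A(2) by (rule le_less_trans)
  have emeasure_T: "emeasure (MA \<Otimes>\<^sub>M MA) (?T n) = (\<Sum>bs\<in>B n. emeasure M (cell M D A bs) ^ 2)" for n
    unfolding MA_def B_def by (rule emeasure_density_cell_squares[OF A D(1)])
  have "emeasure MA {x} = 0" if "x \<in> space M" for x
  proof (cases "{x} \<in> sets M")
    case True
    then have "emeasure MA {x} \<le> emeasure M {x}"
      by (simp add: MA_def emeasure_restricted[OF A(1)] emeasure_mono)
    then show ?thesis using null that by simp
  qed (simp add: emeasure_notin_sets MA_def)
  then have "emeasure (MA \<Otimes>\<^sub>M MA) {(x, x) | x. x \<in> space M} = 0"
    using emeasure_pair_measure_diagonal_eq_0[of MA] diag
    by (simp add: sets_MA2 MA.sigma_finite_measure_axioms) (simp add: MA_def)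
  then have "emeasure (MA \<Otimes>\<^sub>M MA) (\<Inter>n. ?T n) = 0"
    using emeasure_mono[OF INT_cell_squares_subset_diagonal[OF D(2) sets.sets_into_space[OF A(1)]],
        of "MA \<Otimes>\<^sub>M MA"] diag by (simp add: sets_MA2)
  moreover have "(\<lambda>n. emeasure (MA \<Otimes>\<^sub>M MA) (?T n)) \<longlonglongrightarrow> emeasure (MA \<Otimes>\<^sub>M MA) (\<Inter>n. ?T n)"
    using decseq_cell_squares[OF sets.sets_into_space[OF A(1)]] cell_in_sets[OF A(1) D(1)] cell_fin
    by (intro Lim_emeasure_decseq) (auto simp: sets_MA2 emeasure_T B_def finite_lists_length_eq_bool
        power_eq_top_ennreal less_top)
  moreover have "(\<Sum>bs\<in>B n. emeasure M (cell M D A bs) ^ 2)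
      = ennreal (\<Sum>bs\<in>B n. (enn2real (emeasure M (cell M D A bs)))\<^sup>2)" for n
    using cell_fin
    by (subst sum_ennreal[symmetric], simp)
      (intro sum.cong refl, simp add: ennreal_power[symmetric] ennreal_enn2real_if less_top)
  ultimately have "(\<lambda>n. ennreal (\<Sum>bs\<in>B n. (enn2real (emeasure M (cell M D A bs)))\<^sup>2)) \<longlonglongrightarrow> ennreal 0"
    by (simp add: emeasure_T)
  then show ?thesis
    unfolding B_def by (subst (asm) tendsto_ennreal_iff) (auto intro!: always_eventually sum_nonneg)
qed

text \<open>\<open>s\<^sup>\<infinity> = 0\<close> is the limit of \<open>s\<^sup>n\<close> for \<open>0 \<le> s < 1\<close>.\<close>

definition enat_pow :: "real \<Rightarrow> enat \<Rightarrow> real" where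
  "enat_pow s k = (case k of enat n \<Rightarrow> s ^ n | \<infinity> \<Rightarrow> 0)"

lemma enat_pow_bounds: "0 \<le> s \<Longrightarrow> s \<le> 1 \<Longrightarrow> 0 \<le> enat_pow s k \<and> enat_pow s k \<le> 1"
  unfolding enat_pow_def by (cases k) (auto simp: power_le_one)

lemma enat_pow_antimono: "0 \<le> s \<Longrightarrow> s \<le> 1 \<Longrightarrow> k \<le> k' \<Longrightarrow> enat_pow s k' \<le> enat_pow s k"
  unfolding enat_pow_def by (cases k; cases k') (auto simp: power_decreasing)

lemma power_hits_tendsto_enat_pow:
  assumes "separates_points (space M) D" "A \<subseteq> space M" "0 \<le> s" "s < 1"
  shows "(\<lambda>n. s ^ hits M D A n X) \<longlonglongrightarrow> enat_pow s (Ncount A X)"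
proof (cases "Ncount A X")
  case (enat k)
  then obtain n0 where n0: "k \<le> hits M D A n0 X"
    using enat_le_Ncount_iff_hits[OF assms(1,2), of k X] by auto
  have "hits M D A n X = k" if "n0 \<le> n" for n
    using order_trans[OF n0 incseq_hits[OF assms(2), THEN incseqD, OF that]]
      hits_le_Ncount[of M D A n X] enat by simp
  then have "eventually (\<lambda>n. s ^ hits M D A n X = s ^ k) sequentially"
    by (auto intro: eventually_sequentiallyI)
  then show ?thesis unfolding enat_pow_def enat by (simp add: tendsto_eventually)
next
  case infinity
  have "filterlim (\<lambda>n. hits M D A n X) at_top sequentially"
    unfolding filterlim_at_top
  proof
    fix k
    obtain n0 where "k \<le> hits M D A n0 X"
      using Ncount_eq_infinity_iff_hits[OF assms(1,2)] infinity by blast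
    then show "eventually (\<lambda>n. k \<le> hits M D A n X) sequentially"
      using incseq_hits[OF assms(2), THEN incseqD] order_trans
      by (intro eventually_sequentiallyI[of n0]) blast
  qed
  moreover have "(\<lambda>n. s ^ n) \<longlonglongrightarrow> 0" using assms(3,4) by (intro LIMSEQ_power_zero) auto
  ultimately have "(\<lambda>n. s ^ hits M D A n X) \<longlonglongrightarrow> 0"
    by (rule filterlim_compose[rotated])
  then show ?thesis unfolding enat_pow_def infinity by simp
qed

section \<open>Configurations and void events\<close>

definition avoiding :: "'a measure \<Rightarrow> 'a set \<Rightarrow> 'a set set" where
  "avoiding M C = {X \<in> cr_sets M. X \<inter> C = {}}"

lemma space_cr_space: "space (cr_space M) = cr_sets M"
  unfolding cr_space_def by (rule space_measure_of) (auto simp: cr_sets_def)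

lemma sets_cr_space:
  "sets (cr_space M) = sigma_sets (cr_sets M) {{X \<in> cr_sets M. Ncount A X = k} | A k. A \<in> sets M}"
  unfolding cr_space_def by (rule sets_measure_of) auto

lemma measurable_Ncount:
  assumes "A \<in> sets M"
  shows "Ncount A \<in> measurable (cr_space M) (count_space UNIV)"
  unfolding measurable_count_space_eq2_countable
proof (intro conjI ballI)
  fix k :: enat
  have "Ncount A -` {k} \<inter> space (cr_space M) = {X \<in> cr_sets M. Ncount A X = k}"
    by (auto simp: space_cr_space)
  also have "\<dots> \<in> sets (cr_space M)"
    unfolding sets_cr_space using assms by (intro sigma_sets.Basic) blast
  finally show "Ncount A -` {k} \<inter> space (cr_space M) \<in> sets (cr_space M)" .
qed auto

lemma Ncount_eq_0_iff: "Ncount A X = 0 \<longleftrightarrow> X \<inter> A = {}"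
  unfolding Ncount_def by (auto simp: zero_enat_def Int_commute)

lemma Ncount_mono: "A \<subseteq> B \<Longrightarrow> Ncount A X \<le> Ncount B X"
  unfolding Ncount_def using finite_subset[of "A \<inter> X" "B \<inter> X"]
  by (auto intro: card_mono)

lemma avoiding_in_sets:
  assumes "C \<in> sets M"
  shows "avoiding M C \<in> sets (cr_space M)"
proof -
  have "avoiding M C = Ncount C -` {0} \<inter> space (cr_space M)"
    by (auto simp: avoiding_def Ncount_eq_0_iff space_cr_space)
  then show ?thesis using measurable_sets[OF measurable_Ncount[OF assms]] by simp
qed

lemma hits_eq_card_not_avoiding:
  assumes "X \<in> cr_sets M"
  shows "hits M D A n X = card {bs. length bs = n \<and> X \<notin> avoiding M (cell M D A bs)}"
  using assms unfolding hits_def avoiding_def by (intro arg_cong[where f=card]) auto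

lemma measurable_hits:
  assumes S: "space S = cr_sets M" and avoid: "\<And>bs. avoiding M (cell M D A bs) \<in> sets S"
  shows "hits M D A n \<in> measurable S (count_space UNIV)"
proof -
  let ?B = "{bs :: bool list. length bs = n}"
  have "real (hits M D A n X) = (\<Sum>bs\<in>?B. indicator (space S - avoiding M (cell M D A bs)) X)"
    if "X \<in> space S" for X
    using that finite_lists_length_eq_bool[of n]
    by (simp add: hits_eq_card_not_avoiding S indicator_def sum.If_cases Int_def conj_commute)
  then have "(\<lambda>X. real (hits M D A n X)) \<in> borel_measurable S"
    by (rule measurable_cong[THEN iffD2]) (use avoid in auto)
  then have "{X \<in> space S. real (hits M D A n X) = real k} \<in> sets S" for k
    by measurable
  then show ?thesis
    unfolding measurable_count_space_eq2_countable by (auto simp: vimage_def Int_def conj_commute)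
qed

text \<open>\<open>N\<^sub>A\<close> is the increasing limit of the number of cells of \<open>A\<close> hit.\<close>

lemma measurable_Ncount_of_cells:
  assumes S: "space S = cr_sets M" and avoid: "\<And>bs. avoiding M (cell M D A bs) \<in> sets S"
    and sep: "separates_points (space M) D" and A: "A \<subseteq> space M"
  shows "Ncount A \<in> measurable S (count_space UNIV)"
  unfolding measurable_count_space_eq2_countable
proof (intro conjI ballI)
  have le: "{X \<in> space S. hits M D A n X \<le> j} \<in> sets S"
    and ge: "{X \<in> space S. j \<le> hits M D A n X} \<in> sets S" for n j
    using measurable_sets[OF measurable_hits[OF S avoid], of "{..j}" n]
      measurable_sets[OF measurable_hits[OF S avoid], of "{j..}" n]
    by (auto simp: vimage_def Int_def conj_commute)
  fix k :: enat
  show "Ncount A -` {k} \<inter> space S \<in> sets S"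
  proof (cases k)
    case (enat j)
    have "Ncount A X = enat j \<longleftrightarrow> Ncount A X \<le> enat j \<and> enat j \<le> Ncount A X" for X
      by auto
    then have "Ncount A -` {k} \<inter> space S
        = {X \<in> space S. (\<forall>n. hits M D A n X \<le> j) \<and> (\<exists>n. j \<le> hits M D A n X)}"
      using Ncount_le_enat_iff_hits[OF sep A] enat_le_Ncount_iff_hits[OF sep A] enat by auto
    also have "\<dots> \<in> sets S"
      using le ge by (intro sets.sets_Collect_conj sets.sets_Collect_countable_All sets.sets_Collect_countable_Ex)
    finally show ?thesis .
  next
    case infinity
    then have "Ncount A -` {k} \<inter> space S = {X \<in> space S. \<forall>j. \<exists>n. j \<le> hits M D A n X}"
      using Ncount_eq_infinity_iff_hits[OF sep A] by auto
    also have "\<dots> \<in> sets S"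
      using ge by (intro sets.sets_Collect_countable_All sets.sets_Collect_countable_Ex)
    finally show ?thesis .
  qed
qed auto

lemma avoiding_INT_subset:
  assumes "decseq A"
  shows "avoiding M (\<Inter>i. A i) \<subseteq> (\<Union>i. avoiding M (A i)) \<union> {X \<in> cr_sets M. infinite (X \<inter> A 0)}"
proof
  fix X assume X: "X \<in> avoiding M (\<Inter>i. A i)"
  show "X \<in> (\<Union>i. avoiding M (A i)) \<union> {X \<in> cr_sets M. infinite (X \<inter> A 0)}"
  proof (cases "finite (X \<inter> A 0)")
    case True
    have "\<forall>x\<in>X \<inter> A 0. \<exists>i. x \<notin> A i" using X unfolding avoiding_def by auto
    then obtain idx where idx: "\<And>x. x \<in> X \<inter> A 0 \<Longrightarrow> x \<notin> A (idx x)" by metis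
    define N where "N = Max (insert 0 (idx ` (X \<inter> A 0)))"
    have "X \<inter> A N = {}"
    proof (rule ccontr)
      assume "X \<inter> A N \<noteq> {}"
      then obtain x where x: "x \<in> X" "x \<in> A N" by auto
      then have x0: "x \<in> A 0" using assms by (auto simp: decseq_def)
      have "idx x \<le> N" unfolding N_def using True x x0 by (intro Max_ge) auto
      then show False using idx[of x] x x0 assms by (auto simp: decseq_def)
    qed
    then show ?thesis using X unfolding avoiding_def by auto
  qed (use X in \<open>auto simp: avoiding_def\<close>)
qed

lemma measure_distr_avoiding:
  assumes \<pi>: "\<pi> \<in> measurable P (cr_space M)" and C: "C \<in> sets M"
  shows "measure (distr P (cr_space M) \<pi>) (avoiding M C) = measure P {\<omega> \<in> space P. \<pi> \<omega> \<inter> C = {}}"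
proof -
  have "\<pi> -` avoiding M C \<inter> space P = {\<omega> \<in> space P. \<pi> \<omega> \<inter> C = {}}"
    using measurable_space[OF \<pi>] by (auto simp: avoiding_def space_cr_space)
  then show ?thesis using measure_distr[OF \<pi> avoiding_in_sets[OF C]] by simp
qed

lemma one_minus_exp_minus_le: "0 \<le> (x::real) \<Longrightarrow> 1 - exp (- x) \<le> x"
  using exp_ge_add_one_self[of "- x"] by simp

lemma one_minus_exp_minus_ge: "0 \<le> (x::real) \<Longrightarrow> x - x\<^sup>2 \<le> 1 - exp (- x)"
proof -
  assume x: "0 \<le> x"
  have "exp (- x) * (1 + x) \<le> 1"
    using exp_ge_add_one_self[of x] by (simp add: exp_minus field_simps)
  also have "1 \<le> (1 - x + x\<^sup>2) * (1 + x)"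
    using x by (simp add: algebra_simps power2_eq_square power3_eq_cube[symmetric])
  finally show ?thesis using x by (simp add: mult_le_cancel_right)
qed

lemma prod_one_minus_le_exp_sum:
  fixes a :: "'b \<Rightarrow> real"
  assumes "finite B" "\<And>b. b \<in> B \<Longrightarrow> 0 \<le> a b" "\<And>b. b \<in> B \<Longrightarrow> a b \<le> 1"
  shows "(\<Prod>b\<in>B. 1 - a b) \<le> exp (- (\<Sum>b\<in>B. a b))"
proof -
  have "(\<Prod>b\<in>B. 1 - a b) \<le> (\<Prod>b\<in>B. exp (- a b))"
    using assms(2,3) exp_ge_add_one_self[of "- a _"] by (intro prod_mono) auto
  also have "\<dots> = exp (- (\<Sum>b\<in>B. a b))"
    using exp_sum[OF assms(1), of "\<lambda>b. - a b"] by (simp add: sum_negf)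
  finally show ?thesis .
qed

lemma exp_sum_le_prod_one_minus:
  fixes a :: "'b \<Rightarrow> real"
  assumes "finite B" "\<And>b. b \<in> B \<Longrightarrow> 0 \<le> a b" "\<And>b. b \<in> B \<Longrightarrow> a b \<le> 1/2"
  shows "exp (- (\<Sum>b\<in>B. a b) - 2 * (\<Sum>b\<in>B. (a b)\<^sup>2)) \<le> (\<Prod>b\<in>B. 1 - a b)"
proof -
  have "exp (- (\<Sum>b\<in>B. a b) - 2 * (\<Sum>b\<in>B. (a b)\<^sup>2)) = (\<Prod>b\<in>B. exp (- a b - 2 * (a b)\<^sup>2))"
    using exp_sum[OF assms(1), of "\<lambda>b. - a b - 2 * (a b)\<^sup>2"]
    by (simp add: sum_subtractf sum_negf sum_distrib_left)
  also have "\<dots> \<le> (\<Prod>b\<in>B. 1 - a b)"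
  proof (intro prod_mono conjI)
    fix b assume b: "b \<in> B"
    then have "- a b - 2 * (a b)\<^sup>2 \<le> ln (1 - a b)"
      using assms(2,3) by (intro ln_one_minus_pos_lower_bound) auto
    then have "exp (- a b - 2 * (a b)\<^sup>2) \<le> exp (ln (1 - a b))" by simp
    also have "\<dots> = 1 - a b" using assms(3)[OF b] by simp
    finally show "exp (- a b - 2 * (a b)\<^sup>2) \<le> 1 - a b" .
  qed simp
  finally show ?thesis .
qed

lemma prod_one_minus_tendsto_exp:
  fixes a :: "nat \<Rightarrow> 'b \<Rightarrow> real" and B :: "nat \<Rightarrow> 'b set"
  assumes fin: "\<And>n. finite (B n)" and a: "\<And>n b. 0 \<le> a n b" "\<And>n b. a n b \<le> 1"
    and sum: "(\<lambda>n. \<Sum>b\<in>B n. a n b) \<longlonglongrightarrow> L" and sq: "(\<lambda>n. \<Sum>b\<in>B n. (a n b)\<^sup>2) \<longlonglongrightarrow> 0"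
  shows "(\<lambda>n. \<Prod>b\<in>B n. 1 - a n b) \<longlonglongrightarrow> exp (- L)"
proof (rule tendsto_sandwich)
  show "eventually (\<lambda>n. (\<Prod>b\<in>B n. 1 - a n b) \<le> exp (- (\<Sum>b\<in>B n. a n b))) sequentially"
    using fin a by (intro always_eventually allI prod_one_minus_le_exp_sum) auto
  have "eventually (\<lambda>n. (\<Sum>b\<in>B n. (a n b)\<^sup>2) < 1/4) sequentially"
    using sq by (rule order_tendstoD) simp
  then show "eventually (\<lambda>n. exp (- (\<Sum>b\<in>B n. a n b) - 2 * (\<Sum>b\<in>B n. (a n b)\<^sup>2))
      \<le> (\<Prod>b\<in>B n. 1 - a n b)) sequentially"
  proof (rule eventually_mono)
    fix n assume small: "(\<Sum>b\<in>B n. (a n b)\<^sup>2) < 1/4"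
    have "a n b \<le> 1/2" if "b \<in> B n" for b
    proof -
      have "(a n b)\<^sup>2 < (1/2)\<^sup>2"
        using member_le_sum[of b "B n" "\<lambda>b. (a n b)\<^sup>2"] that fin small by (simp add: power2_eq_square)
      then show ?thesis using a(1)[of n b] power_less_imp_less_base by fastforce
    qed
    then show "exp (- (\<Sum>b\<in>B n. a n b) - 2 * (\<Sum>b\<in>B n. (a n b)\<^sup>2)) \<le> (\<Prod>b\<in>B n. 1 - a n b)"
      using fin a by (intro exp_sum_le_prod_one_minus) auto
  qed
  show "(\<lambda>n. exp (- (\<Sum>b\<in>B n. a n b))) \<longlonglongrightarrow> exp (- L)"
    using sum by (intro tendsto_intros)
  show "(\<lambda>n. exp (- (\<Sum>b\<in>B n. a n b) - 2 * (\<Sum>b\<in>B n. (a n b)\<^sup>2))) \<longlonglongrightarrow> exp (- L)"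
    using tendsto_exp[OF tendsto_diff[OF tendsto_minus[OF sum] tendsto_mult[OF tendsto_const sq]]]
    by simp
qed

text \<open>Here \<open>t c - \<Sum>\<^sub>b m\<^sub>n\<^sub>b\<^sup>2 \<le> \<Sum>\<^sub>b t (1 - exp (- m\<^sub>n\<^sub>b)) \<le> t c\<close>.\<close>

lemma prod_one_minus_exp_tendsto:
  fixes m :: "nat \<Rightarrow> 'b \<Rightarrow> real" and B :: "nat \<Rightarrow> 'b set"
  assumes fin: "\<And>n. finite (B n)" and pos: "\<And>n b. 0 \<le> m n b"
    and sum_eq: "\<And>n. (\<Sum>b\<in>B n. m n b) = c"
    and sq: "(\<lambda>n. \<Sum>b\<in>B n. (m n b)\<^sup>2) \<longlonglongrightarrow> 0"
    and t: "0 \<le> t" "t \<le> 1"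
  shows "(\<lambda>n. \<Prod>b\<in>B n. (1 - t * (1 - exp (- m n b)))) \<longlonglongrightarrow> exp (- t * c)"
proof -
  define a where "a n b = t * (1 - exp (- m n b))" for n b
  have a0: "0 \<le> a n b" and a1: "a n b \<le> 1" for n b
    unfolding a_def using t pos[of n b] by (auto simp: mult_le_one)
  have am: "a n b \<le> m n b" for n b
    unfolding a_def using t pos[of n b] one_minus_exp_minus_le[of "m n b"]
    by (meson diff_ge_0_iff_ge exp_le_one_iff mult_left_le_one_le neg_le_0_iff_le order_trans)
  have upper: "(\<Sum>b\<in>B n. a n b) \<le> t * c" for n
  proof -
    have "(\<Sum>b\<in>B n. a n b) \<le> (\<Sum>b\<in>B n. t * m n b)"
      unfolding a_def using t one_minus_exp_minus_le[OF pos] by (intro sum_mono mult_left_mono) auto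
    then show ?thesis using sum_eq[of n] by (simp add: sum_distrib_left[symmetric])
  qed
  have lower: "t * c - (\<Sum>b\<in>B n. (m n b)\<^sup>2) \<le> (\<Sum>b\<in>B n. a n b)" for n
  proof -
    have "t * c - (\<Sum>b\<in>B n. (m n b)\<^sup>2) \<le> (\<Sum>b\<in>B n. t * (m n b - (m n b)\<^sup>2))"
      using sum_eq[of n] t mult_left_le_one_le[OF sum_nonneg[of "B n" "\<lambda>b. (m n b)\<^sup>2"] t]
      by (simp add: sum_subtractf right_diff_distrib sum_distrib_left[symmetric])
    also have "\<dots> \<le> (\<Sum>b\<in>B n. a n b)"
      unfolding a_def using t one_minus_exp_minus_ge[OF pos] by (intro sum_mono mult_left_mono) auto
    finally show ?thesis .
  qed
  have "(\<lambda>n. t * c - (\<Sum>b\<in>B n. (m n b)\<^sup>2)) \<longlonglongrightarrow> t * c"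
    using tendsto_diff[OF tendsto_const sq, of "t * c"] by simp
  then have sum_a: "(\<lambda>n. \<Sum>b\<in>B n. a n b) \<longlonglongrightarrow> t * c"
    by (rule tendsto_sandwich[OF always_eventually[OF allI[OF lower]]
          always_eventually[OF allI[OF upper]] _ tendsto_const])
  have "0 \<le> (\<Sum>b\<in>B n. (a n b)\<^sup>2)" "(\<Sum>b\<in>B n. (a n b)\<^sup>2) \<le> (\<Sum>b\<in>B n. (m n b)\<^sup>2)" for n
    using a0 am by (auto intro!: sum_nonneg sum_mono power_mono)
  then have sq_a: "(\<lambda>n. \<Sum>b\<in>B n. (a n b)\<^sup>2) \<longlonglongrightarrow> 0"
    by (intro tendsto_sandwich[OF always_eventually always_eventually tendsto_const sq]) auto
  from sum_a sq_a have "(\<lambda>n. \<Prod>b\<in>B n. 1 - a n b) \<longlonglongrightarrow> exp (- (t * c))"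
    by (rule prod_one_minus_tendsto_exp[OF fin a0 a1])
  then show ?thesis unfolding a_def by simp
qed

lemma powser_zero_on_interval_imp_zero:
  fixes a :: "nat \<Rightarrow> real"
  assumes r: "0 < r" and zero: "\<And>x. 0 < x \<Longrightarrow> x < r \<Longrightarrow> (\<lambda>n. a n * x ^ n) sums 0"
  shows "a k = 0"
proof (induction k rule: less_induct)
  case (less k)
  define f where "f x = (\<Sum>n. a (n + k) * x ^ n)" for x :: real
  have tail: "(\<lambda>n. a (n + k) * x ^ n) sums 0" if x: "0 < x" "x < r" for x
  proof -
    have "(\<lambda>n. a (n + k) * x ^ (n + k)) sums (0 - (\<Sum>n<k. a n * x ^ n))"
      by (rule sums_split_initial_segment[OF zero[OF x]])
    then have "(\<lambda>n. a (n + k) * x ^ (n + k) / x ^ k) sums (0 / x ^ k)"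
      using less by (intro sums_divide) simp
    then show ?thesis using x by (simp add: power_add)
  qed
  have "isCont f 0"
    unfolding f_def using tail[of "r/2"] r by (intro isCont_powser[of _ "r/2"]) (auto simp: sums_iff)
  then have "(f \<longlongrightarrow> a k) (at_right 0)"
    unfolding isCont_def f_def by (auto intro: tendsto_within_subset)
  moreover have "eventually (\<lambda>x. f x = 0) (at_right 0)"
    unfolding eventually_at_right_field f_def using r tail by (auto simp: sums_iff)
  then have "(f \<longlongrightarrow> 0) (at_right 0)" by (rule tendsto_eventually)
  ultimately show ?case by (metis tendsto_unique trivial_limit_at_right_real)
qed

lemma exp_neg_add: "exp_neg (a + b) = exp_neg a * exp_neg b"
  unfolding exp_neg_def by (auto simp: enn2real_plus exp_add[symmetric] less_top)

lemma exp_neg_sum: "finite J \<Longrightarrow> exp_neg (\<Sum>j\<in>J. x j) = (\<Prod>j\<in>J. exp_neg (x j))"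
  by (induction J rule: finite_induct) (simp_all add: exp_neg_add exp_neg_def[of 0])

lemma filterlim_enn2real_at_top:
  assumes x: "x \<longlonglongrightarrow> \<infinity>" and fin: "\<And>n. x n \<noteq> \<infinity>"
  shows "filterlim (\<lambda>n. enn2real (x n)) at_top sequentially"
  unfolding filterlim_at_top
proof
  fix Z :: real
  have "eventually (\<lambda>n. ennreal (max 0 Z) < x n) sequentially"
    using x by (intro order_tendstoD(1)) auto
  then show "eventually (\<lambda>n. Z \<le> enn2real (x n)) sequentially"
  proof (rule eventually_mono)
    fix n assume "ennreal (max 0 Z) < x n"
    then have "enn2real (ennreal (max 0 Z)) \<le> enn2real (x n)"
      using fin[of n] by (intro enn2real_mono) (auto simp: less_top)
    then show "Z \<le> enn2real (x n)" by (metis enn2real_ennreal max.cobounded1 max.cobounded2 order_trans)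
  qed
qed

lemma exp_neg_tendsto:
  assumes x: "x \<longlonglongrightarrow> L" and fin: "\<And>n. x n \<noteq> \<infinity>"
  shows "(\<lambda>n. exp_neg (x n)) \<longlonglongrightarrow> exp_neg L"
proof (cases "L = \<infinity>")
  case True
  then have "(\<lambda>n. exp (- enn2real (x n))) \<longlonglongrightarrow> 0"
    using filterlim_enn2real_at_top[OF _ fin] x
    by (intro filterlim_compose[OF exp_at_bot] filterlim_compose[OF filterlim_uminus_at_bot_at_top]) auto
  then show ?thesis using True fin by (simp add: exp_neg_def)
next
  case False
  then have "x \<longlonglongrightarrow> ennreal (enn2real L)" using x by (simp add: ennreal_enn2real_if)
  then have "(\<lambda>n. enn2real (x n)) \<longlonglongrightarrow> enn2real L" by (rule tendsto_enn2real) simp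
  then show ?thesis using False fin by (simp add: exp_neg_def tendsto_exp tendsto_minus)
qed

lemma prod_if_one_eq_power:
  assumes "finite B"
  shows "(\<Prod>b\<in>B. if P b then 1 else s) = s ^ card {b\<in>B. \<not> P b}"
proof -
  have "(\<Prod>b\<in>B. if P b then 1 else s) = (\<Prod>b\<in>{b\<in>B. \<not> P b}. s)"
    using assms by (intro prod.mono_neutral_cong_right) auto
  then show ?thesis by simp
qed

text \<open>Expanding the product over \<open>B\<close> into a sum over the subsets \<open>U \<subseteq> B\<close> of the factors
  \<open>(1 - s) \<one>\<^bsub>V b\<^esub>\<close>; only the probabilities of the intersections enter.\<close>

lemma (in prob_space) expectation_prod_if_events:
  fixes s :: real
  assumes B: "finite B" and V: "\<And>b. b \<in> B \<Longrightarrow> V b \<in> events"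
    and p: "\<And>U. U \<subseteq> B \<Longrightarrow> prob (space M \<inter> (\<Inter>b\<in>U. V b)) = (\<Prod>b\<in>U. p b)"
  shows "expectation (\<lambda>x. \<Prod>b\<in>B. if x \<in> V b then 1 else s) = (\<Prod>b\<in>B. s + (1 - s) * p b)"
proof -
  define W where "W U = space M \<inter> (\<Inter>b\<in>U. V b)" for U
  define c where "c U = (1 - s) ^ card U * s ^ card (B - U)" for U
  have W: "W U \<in> events" if "U \<subseteq> B" for U
  proof (cases "U = {}")
    case False
    then have "W U = (\<Inter>b\<in>U. V b)" using V that sets.sets_into_space unfolding W_def by blast
    moreover have "(\<Inter>b\<in>U. V b) \<in> events"
      using False that V finite_subset[OF that B] by (intro sets.finite_INT) auto
    ultimately show ?thesis by simp
  qed (simp add: W_def)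
  have expand: "(\<Prod>b\<in>B. if x \<in> V b then 1 else s) = (\<Sum>U\<in>Pow B. c U * indicator (W U) x)"
    if x: "x \<in> space M" for x
  proof -
    have "(\<Prod>b\<in>B. if x \<in> V b then 1 else s) = (\<Prod>b\<in>B. (1 - s) * indicator (V b) x + s)"
      by (intro prod.cong) (auto simp: indicator_def)
    also have "\<dots> = (\<Sum>U\<in>Pow B. (\<Prod>b\<in>U. (1 - s) * indicator (V b) x) * (\<Prod>b\<in>B - U. s))"
      by (rule prod_add[OF B])
    also have "\<dots> = (\<Sum>U\<in>Pow B. c U * indicator (W U) x)"
    proof (intro sum.cong refl)
      fix U assume "U \<in> Pow B"
      then have "finite U" using B finite_subset by auto
      then have "(\<Prod>b\<in>U. indicator (V b) x :: real) = indicator (W U) x"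
        using x unfolding W_def by (induction U rule: finite_induct) (auto simp: indicator_def)
      then show "(\<Prod>b\<in>U. (1 - s) * indicator (V b) x) * (\<Prod>b\<in>B - U. s) = c U * indicator (W U) x"
        by (simp add: prod.distrib c_def)
    qed
    finally show ?thesis .
  qed
  have "expectation (\<lambda>x. \<Prod>b\<in>B. if x \<in> V b then 1 else s)
      = expectation (\<lambda>x. \<Sum>U\<in>Pow B. c U * indicator (W U) x)"
    by (intro Bochner_Integration.integral_cong refl expand)
  also have "\<dots> = (\<Sum>U\<in>Pow B. c U * prob (W U))"
    using W by (subst Bochner_Integration.integral_sum) (auto intro!: sum.cong integrable_real_indicator
        simp: less_top[symmetric])
  also have "\<dots> = (\<Sum>U\<in>Pow B. (\<Prod>b\<in>U. (1 - s) * p b) * (\<Prod>b\<in>B - U. s))"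
    using p B unfolding W_def c_def by (intro sum.cong refl) (auto simp: prod.distrib finite_subset)
  also have "\<dots> = (\<Prod>b\<in>B. (1 - s) * p b + s)"
    by (rule prod_add[OF B, symmetric])
  finally show ?thesis by (simp add: add.commute)
qed

section \<open>Monotone classes\<close>

inductive_set monotone_hull :: "'a set set \<Rightarrow> 'a set set" for F where
  Basic: "a \<in> F \<Longrightarrow> a \<in> monotone_hull F"
| Inc: "(\<And>i. A i \<in> monotone_hull F) \<Longrightarrow> incseq A \<Longrightarrow> (\<Union>i::nat. A i) \<in> monotone_hull F"
| Dec: "(\<And>i. A i \<in> monotone_hull F) \<Longrightarrow> decseq A \<Longrightarrow> (\<Inter>i::nat. A i) \<in> monotone_hull F"

lemma monotone_hull_subset:
  assumes "F \<subseteq> L"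
    and inc: "\<And>A. range A \<subseteq> L \<Longrightarrow> incseq A \<Longrightarrow> (\<Union>i::nat. A i) \<in> L"
    and dec: "\<And>A. range A \<subseteq> L \<Longrightarrow> decseq A \<Longrightarrow> (\<Inter>i::nat. A i) \<in> L"
  shows "monotone_hull F \<subseteq> L"
proof
  fix a assume "a \<in> monotone_hull F"
  then show "a \<in> L" by induction (use assms in blast)+
qed

context
  fixes \<Omega> F assumes F: "algebra \<Omega> F"
begin

lemma monotone_hull_Diff: "a \<in> monotone_hull F \<Longrightarrow> \<Omega> - a \<in> monotone_hull F"
proof (induction rule: monotone_hull.induct)
  case (Basic a)
  interpret algebra \<Omega> F by (rule F)
  show ?case using Basic by (auto intro: monotone_hull.Basic)
next
  case (Inc A)
  have "decseq (\<lambda>i. \<Omega> - A i)" using \<open>incseq A\<close> by (auto simp: incseq_def decseq_def)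
  then have "(\<Inter>i. \<Omega> - A i) \<in> monotone_hull F" by (rule monotone_hull.Dec[OF Inc.IH])
  moreover have "(\<Inter>i. \<Omega> - A i) = \<Omega> - (\<Union>i. A i)" by auto
  ultimately show ?case by simp
next
  case (Dec A)
  have "incseq (\<lambda>i. \<Omega> - A i)" using \<open>decseq A\<close> by (auto simp: incseq_def decseq_def)
  then have "(\<Union>i. \<Omega> - A i) \<in> monotone_hull F" by (rule monotone_hull.Inc[OF Dec.IH])
  moreover have "(\<Union>i. \<Omega> - A i) = \<Omega> - (\<Inter>i. A i)" by auto
  ultimately show ?case by simp
qed

lemma monotone_hull_Un_algebra: "a \<in> monotone_hull F \<Longrightarrow> b \<in> F \<Longrightarrow> a \<union> b \<in> monotone_hull F"
proof (induction rule: monotone_hull.induct)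
  case (Basic a)
  interpret algebra \<Omega> F by (rule F)
  show ?case using Basic by (auto intro: monotone_hull.Basic)
next
  case (Inc A)
  have "incseq (\<lambda>i. A i \<union> b)" using \<open>incseq A\<close> by (auto simp: incseq_def)
  then have "(\<Union>i. A i \<union> b) \<in> monotone_hull F" using Inc by (intro monotone_hull.Inc) auto
  moreover have "(\<Union>i. A i \<union> b) = (\<Union>i. A i) \<union> b" by auto
  ultimately show ?case by simp
next
  case (Dec A)
  have "decseq (\<lambda>i. A i \<union> b)" using \<open>decseq A\<close> by (auto simp: decseq_def)
  then have "(\<Inter>i. A i \<union> b) \<in> monotone_hull F" using Dec by (intro monotone_hull.Dec) auto
  moreover have "(\<Inter>i. A i \<union> b) = (\<Inter>i. A i) \<union> b" by auto
  ultimately show ?case by simp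
qed

lemma monotone_hull_Un: "b \<in> monotone_hull F \<Longrightarrow> a \<in> monotone_hull F \<Longrightarrow> a \<union> b \<in> monotone_hull F"
proof (induction rule: monotone_hull.induct)
  case (Basic b)
  then show ?case using monotone_hull_Un_algebra by blast
next
  case (Inc A)
  have "incseq (\<lambda>i. a \<union> A i)" using \<open>incseq A\<close> by (auto simp: incseq_def)
  then have "(\<Union>i. a \<union> A i) \<in> monotone_hull F" using Inc by (intro monotone_hull.Inc) auto
  moreover have "(\<Union>i. a \<union> A i) = a \<union> (\<Union>i. A i)" by auto
  ultimately show ?case by simp
next
  case (Dec A)
  have "decseq (\<lambda>i. a \<union> A i)" using \<open>decseq A\<close> by (auto simp: decseq_def)
  then have "(\<Inter>i. a \<union> A i) \<in> monotone_hull F" using Dec by (intro monotone_hull.Dec) auto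
  moreover have "(\<Inter>i. a \<union> A i) = a \<union> (\<Inter>i. A i)" by auto
  ultimately show ?case by simp
qed

lemma sigma_sets_subset_monotone_hull: "sigma_sets \<Omega> F \<subseteq> monotone_hull F"
proof
  fix a assume "a \<in> sigma_sets \<Omega> F"
  then show "a \<in> monotone_hull F"
  proof induction
    case Empty
    interpret algebra \<Omega> F by (rule F)
    show ?case by (auto intro: monotone_hull.Basic)
  next
    case (Compl a)
    then show ?case using monotone_hull_Diff by blast
  next
    case (Union A)
    have partial: "(\<Union>i\<le>n. A i) \<in> monotone_hull F" for n
      by (induction n) (simp_all add: atMost_Suc Union monotone_hull_Un)
    have "incseq (\<lambda>n. \<Union>i\<le>n. A i)" by (intro monoI UN_mono) auto
    then have "(\<Union>n. \<Union>i\<le>n. A i) \<in> monotone_hull F" using partial by (rule monotone_hull.Inc[rotated])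
    moreover have "(\<Union>n. \<Union>i\<le>n. A i) = (\<Union>i. A i)" by auto
    ultimately show ?case by simp
  qed (rule monotone_hull.Basic)
qed

end

theorem monotone_class:
  assumes "algebra \<Omega> F" "F \<subseteq> L"
    and "\<And>A. range A \<subseteq> L \<Longrightarrow> incseq A \<Longrightarrow> (\<Union>i::nat. A i) \<in> L"
    and "\<And>A. range A \<subseteq> L \<Longrightarrow> decseq A \<Longrightarrow> (\<Inter>i::nat. A i) \<in> L"
  shows "sigma_sets \<Omega> F \<subseteq> L"
  using sigma_sets_subset_monotone_hull[OF assms(1)] monotone_hull_subset[OF assms(2-)] by blast

section \<open>Laws of cr-sets with Poisson void probabilities\<close>

definition poisson_voids :: "'a set measure \<Rightarrow> 'a measure \<Rightarrow> 'a set set \<Rightarrow> bool" where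
  "poisson_voids Q M K \<longleftrightarrow> (\<forall>C\<in>K. measure Q (avoiding M C) = exp_neg (emeasure M C))"

text \<open>\<open>Q\<close> plays the role of the law \<open>P\<^sub>\<pi>\<close> of the cr-set; the void probabilities are imposed
  separately, as \<open>poisson_voids Q M K\<close> for various classes \<open>K\<close>.\<close>

locale renyi_setting = prob_space Q for Q :: "'a set measure" +
  fixes M :: "'a measure" and D :: "nat \<Rightarrow> 'a set"
  assumes sets_Q: "sets Q = sets (cr_space M)"
    and range_D: "range D \<subseteq> sets M" and separating: "separates_points (space M) D"
    and diagonal: "{(x, x) | x. x \<in> space M} \<in> sets (M \<Otimes>\<^sub>M M)"
    and singletons_null: "\<forall>x \<in> space M. emeasure M {x} = 0"
begin

lemma space_Q: "space Q = cr_sets M"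
  using sets_eq_imp_space_eq[OF sets_Q] by (simp add: space_cr_space)

lemma random_variable_Ncount: "A \<in> sets M \<Longrightarrow> random_variable (count_space UNIV) (Ncount A)"
  using measurable_Ncount measurable_cong_sets[OF sets_Q refl] by blast

lemma avoiding_event: "C \<in> sets M \<Longrightarrow> avoiding M C \<in> events"
  using avoiding_in_sets sets_Q by blast

lemma Ncount_level_event: "A \<in> sets M \<Longrightarrow> {X \<in> space Q. Ncount A X = k} \<in> events"
  using measurable_sets[OF random_variable_Ncount, of A "{k}"] by (simp add: vimage_def Int_def conj_commute)

lemma borel_measurable_enat_pow_Ncount:
  "A \<in> sets M \<Longrightarrow> (\<lambda>X. enat_pow s (Ncount A X)) \<in> borel_measurable Q"
  using measurable_compose[OF random_variable_Ncount, of A "enat_pow s" borel] by auto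

lemma integrable_enat_pow_Ncount:
  "A \<in> sets M \<Longrightarrow> 0 \<le> s \<Longrightarrow> s \<le> 1 \<Longrightarrow> integrable Q (\<lambda>X. enat_pow s (Ncount A X))"
  using enat_pow_bounds[of s] borel_measurable_enat_pow_Ncount
  by (intro integrable_const_bound[where B=1]) auto

lemma prob_Inter_avoiding:
  assumes voids: "poisson_voids Q M K" and U: "finite U" and C: "C ` U \<subseteq> sets M"
    and disj: "disjoint_family_on C U" and UN: "(\<Union>i\<in>U. C i) \<in> K"
  shows "prob (space Q \<inter> (\<Inter>i\<in>U. avoiding M (C i))) = (\<Prod>i\<in>U. exp_neg (emeasure M (C i)))"
proof -
  have "space Q \<inter> (\<Inter>i\<in>U. avoiding M (C i)) = avoiding M (\<Union>i\<in>U. C i)"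
    by (auto simp: space_Q avoiding_def)
  then have "prob (space Q \<inter> (\<Inter>i\<in>U. avoiding M (C i))) = exp_neg (emeasure M (\<Union>i\<in>U. C i))"
    using voids UN unfolding poisson_voids_def by simp
  also have "emeasure M (\<Union>i\<in>U. C i) = (\<Sum>i\<in>U. emeasure M (C i))"
    using C disj U by (intro sum_emeasure[symmetric]) auto
  finally show ?thesis by (simp add: exp_neg_sum[OF U])
qed

context
  fixes K assumes ring_K: "ring_of_sets (space M) K" and K_sets: "K \<subseteq> sets M"
    and D_K: "range D \<subseteq> K" and voids_K: "poisson_voids Q M K"
begin

lemma expectation_power_hits:
  assumes A: "A \<in> K"
  shows "expectation (\<lambda>X. s ^ hits M D A n X)
    = (\<Prod>bs\<in>{bs. length bs = n}. s + (1 - s) * exp_neg (emeasure M (cell M D A bs)))"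
proof -
  let ?B = "{bs :: bool list. length bs = n}"
  have cell_K: "cell M D A bs \<in> K" for bs using cell_in_ring[OF ring_K D_K A] .
  have "s ^ hits M D A n X = (\<Prod>bs\<in>?B. if X \<in> avoiding M (cell M D A bs) then 1 else s)"
    if "X \<in> space Q" for X
    using that by (simp add: prod_if_one_eq_power finite_lists_length_eq_bool
        hits_eq_card_not_avoiding space_Q)
  then have "expectation (\<lambda>X. s ^ hits M D A n X)
      = expectation (\<lambda>X. \<Prod>bs\<in>?B. if X \<in> avoiding M (cell M D A bs) then 1 else s)"
    by (rule Bochner_Integration.integral_cong[OF refl])
  also have "\<dots> = (\<Prod>bs\<in>?B. s + (1 - s) * exp_neg (emeasure M (cell M D A bs)))"
  proof (rule expectation_prod_if_events[OF finite_lists_length_eq_bool])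
    show "avoiding M (cell M D A bs) \<in> events" for bs
      using cell_K K_sets by (intro avoiding_event) auto
    fix U assume U: "U \<subseteq> ?B"
    show "prob (space Q \<inter> (\<Inter>bs\<in>U. avoiding M (cell M D A bs)))
        = (\<Prod>bs\<in>U. exp_neg (emeasure M (cell M D A bs)))"
    proof (rule prob_Inter_avoiding[OF voids_K])
      show "finite U" using U finite_lists_length_eq_bool finite_subset by blast
      show "cell M D A ` U \<subseteq> sets M" using cell_K K_sets by auto
      show "disjoint_family_on (cell M D A) U"
        using disjoint_family_on_cell U by (rule disjoint_family_on_mono[rotated])
      show "(\<Union>bs\<in>U. cell M D A bs) \<in> K"
        using cell_K \<open>finite U\<close> ring_of_sets.finite_UN[OF ring_K] by blast
    qed
  qed
  finally show ?thesis .
qed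

lemma expectation_enat_pow_Ncount:
  assumes A: "A \<in> K" "emeasure M A < \<infinity>" and s: "0 \<le> s" "s < 1"
  shows "expectation (\<lambda>X. enat_pow s (Ncount A X)) = exp (- (1 - s) * enn2real (emeasure M A))"
proof -
  have AM: "A \<in> sets M" using A K_sets by auto
  have Asp: "A \<subseteq> space M" using AM sets.sets_into_space by auto
  define m where "m n bs = enn2real (emeasure M (cell M D A bs))" for n :: nat and bs
  define B where "B n = {bs :: bool list. length bs = n}" for n
  have cell_fin: "emeasure M (cell M D A bs) < \<infinity>" for bs
    using emeasure_mono[OF cell_subset AM] A(2) by (rule le_less_trans)
  have "(\<lambda>X. s ^ hits M D A n X) \<in> borel_measurable Q" for n
    using measurable_hits[OF space_Q avoiding_event[OF cell_in_sets[OF AM range_D]]]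
    by (rule measurable_compose) simp
  then have "(\<lambda>n. expectation (\<lambda>X. s ^ hits M D A n X)) \<longlonglongrightarrow> expectation (\<lambda>X. enat_pow s (Ncount A X))"
    using power_hits_tendsto_enat_pow[OF separating Asp s] borel_measurable_enat_pow_Ncount[OF AM] s
    by (intro integral_dominated_convergence[where w="\<lambda>_. 1"]) (auto simp: power_le_one)
  moreover have "expectation (\<lambda>X. s ^ hits M D A n X) = (\<Prod>bs\<in>B n. 1 - (1 - s) * (1 - exp (- m n bs)))"
    for n
  proof -
    have "s + (1 - s) * exp_neg (emeasure M (cell M D A bs)) = 1 - (1 - s) * (1 - exp (- m n bs))" for bs
      using cell_fin[of bs] by (simp add: exp_neg_def m_def algebra_simps)
    then show ?thesis unfolding expectation_power_hits[OF A(1)] B_def by simp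
  qed
  moreover have "(\<lambda>n. \<Prod>bs\<in>B n. 1 - (1 - s) * (1 - exp (- m n bs)))
      \<longlonglongrightarrow> exp (- (1 - s) * enn2real (emeasure M A))"
  proof (rule prod_one_minus_exp_tendsto)
    show "(\<Sum>bs\<in>B n. m n bs) = enn2real (emeasure M A)" for n
      unfolding m_def B_def sum_emeasure_cell[OF AM range_D, of n, symmetric]
      using cell_fin by (simp add: enn2real_sum finite_lists_length_eq_bool)
    show "(\<lambda>n. \<Sum>bs\<in>B n. (m n bs)\<^sup>2) \<longlonglongrightarrow> 0"
      unfolding B_def m_def
      by (rule sum_squared_cell_measures_tendsto_0[OF diagonal singletons_null range_D separating AM A(2)])
  qed (use s in \<open>simp_all add: B_def m_def finite_lists_length_eq_bool\<close>)
  ultimately show ?thesis using LIMSEQ_unique by simp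
qed

text \<open>As \<open>s \<rightarrow> 1\<close>, \<open>exp (-(1 - s) \<mu> A) \<rightarrow> 1\<close>, while \<open>enat_pow s N\<^sub>A\<close> vanishes where \<open>N\<^sub>A = \<infinity>\<close>.\<close>

lemma prob_Ncount_infinite_eq_0:
  assumes A: "A \<in> K" "emeasure M A < \<infinity>"
  shows "prob {X \<in> space Q. Ncount A X = \<infinity>} = 0"
proof -
  have AM: "A \<in> sets M" using A K_sets by auto
  define E where "E = {X \<in> space Q. Ncount A X = \<infinity>}"
  have E: "E \<in> events" unfolding E_def by (rule Ncount_level_event[OF AM])
  define s where "s k = 1 - inverse (real (Suc k))" for k
  have s: "0 \<le> s k" "s k < 1" for k unfolding s_def by (auto simp: field_simps)
  have "exp (- (1 - s k) * enn2real (emeasure M A)) \<le> 1 - prob E" for k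
  proof -
    have "exp (- (1 - s k) * enn2real (emeasure M A)) = expectation (\<lambda>X. enat_pow (s k) (Ncount A X))"
      using expectation_enat_pow_Ncount[OF A s] by simp
    also have "\<dots> \<le> expectation (indicator (space Q - E))"
      using E integrable_enat_pow_Ncount[OF AM] enat_pow_bounds[of "s k"] s[of k]
      by (intro integral_mono) (auto simp: indicator_def E_def enat_pow_def less_imp_le
          intro!: integrable_real_indicator simp: less_top[symmetric])
    also have "\<dots> = 1 - prob E" using E by (simp add: prob_compl)
    finally show ?thesis .
  qed
  moreover have "(\<lambda>k. exp (- (1 - s k) * enn2real (emeasure M A))) \<longlonglongrightarrow> exp (- 0 * enn2real (emeasure M A))"
    unfolding s_def using LIMSEQ_inverse_real_of_nat by (intro tendsto_intros) simp
  ultimately have "exp (- 0 * enn2real (emeasure M A)) \<le> 1 - prob E"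
    by (intro LIMSEQ_le_const2) auto
  then show ?thesis unfolding E_def by (simp add: measure_nonneg antisym)
qed

end

lemma prob_avoiding_UN_incseq:
  assumes A: "range A \<subseteq> sets M" "incseq A" "\<And>i. emeasure M (A i) < \<infinity>"
    and voids: "\<And>i. prob (avoiding M (A i)) = exp_neg (emeasure M (A i))"
  shows "prob (avoiding M (\<Union>i. A i)) = exp_neg (emeasure M (\<Union>i. A i))"
proof -
  have "decseq (\<lambda>i. avoiding M (A i))"
    using A(2) by (auto simp: avoiding_def incseq_def decseq_def)
  moreover have "avoiding M (\<Union>i. A i) = (\<Inter>i. avoiding M (A i))" by (auto simp: avoiding_def)
  ultimately have "(\<lambda>i. prob (avoiding M (A i))) \<longlonglongrightarrow> prob (avoiding M (\<Union>i. A i))"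
    using A(1) by (auto intro!: finite_Lim_measure_decseq avoiding_event)
  moreover have "(\<lambda>i. prob (avoiding M (A i))) \<longlonglongrightarrow> exp_neg (emeasure M (\<Union>i. A i))"
    unfolding voids using A less_imp_neq[OF A(3)] by (intro exp_neg_tendsto Lim_emeasure_incseq) auto
  ultimately show ?thesis using LIMSEQ_unique by metis
qed

text \<open>Avoiding a decreasing intersection is the increasing union of avoiding its members, up to
  configurations with infinitely many points in \<open>A 0\<close>; hence the finiteness of \<open>N\<^sub>B\<close>.\<close>

lemma prob_avoiding_INT_decseq:
  assumes A: "range A \<subseteq> sets M" "decseq A" "\<And>i. emeasure M (A i) < \<infinity>"
    and voids: "\<And>i. prob (avoiding M (A i)) = exp_neg (emeasure M (A i))"
    and B: "B \<in> sets M" "A 0 \<subseteq> B" and finite_B: "prob {X \<in> space Q. Ncount B X = \<infinity>} = 0"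
  shows "prob (avoiding M (\<Inter>i. A i)) = exp_neg (emeasure M (\<Inter>i. A i))"
proof -
  let ?V = "\<lambda>i. avoiding M (A i)" and ?E = "{X \<in> space Q. Ncount B X = \<infinity>}"
  have V: "range ?V \<subseteq> events" using A(1) avoiding_event by auto
  have E: "?E \<in> events" by (rule Ncount_level_event[OF B(1)])
  have "incseq ?V" using A(2) by (auto simp: avoiding_def incseq_def decseq_def)
  then have "(\<lambda>i. prob (?V i)) \<longlonglongrightarrow> prob (\<Union>i. ?V i)"
    using V by (intro finite_Lim_measure_incseq) auto
  moreover have "prob (avoiding M (\<Inter>i. A i)) = prob (\<Union>i. ?V i)"
  proof (rule antisym)
    have "infinite (X \<inter> B)" if "infinite (X \<inter> A 0)" for X
      using that B(2) finite_subset[of "X \<inter> A 0" "X \<inter> B"] by blast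
    then have "avoiding M (\<Inter>i. A i) \<subseteq> (\<Union>i. ?V i) \<union> ?E"
      using avoiding_INT_subset[OF A(2), of M] by (auto simp: space_Q Ncount_def Int_commute)
    then have "prob (avoiding M (\<Inter>i. A i)) \<le> prob ((\<Union>i. ?V i) \<union> ?E)"
      using V E by (intro finite_measure_mono) auto
    also have "\<dots> \<le> prob (\<Union>i. ?V i) + prob ?E"
      using V E by (intro measure_subadditive) auto
    finally show "prob (avoiding M (\<Inter>i. A i)) \<le> prob (\<Union>i. ?V i)" using finite_B by simp
    show "prob (\<Union>i. ?V i) \<le> prob (avoiding M (\<Inter>i. A i))"
      using A(1) by (intro finite_measure_mono avoiding_event) (auto simp: avoiding_def)
  qed
  moreover have "(\<lambda>i. prob (?V i)) \<longlonglongrightarrow> exp_neg (emeasure M (\<Inter>i. A i))"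
    unfolding voids using A by (intro exp_neg_tendsto Lim_emeasure_decseq) (auto simp: less_top)
  ultimately show ?thesis using LIMSEQ_unique by metis
qed

context
  fixes R assumes ring_R: "ring_of_sets (space M) R" and gen_R: "sigma_sets (space M) R = sets M"
    and D_R: "range D \<subseteq> R" and voids_R: "poisson_voids Q M R"
begin

lemma R_sets: "R \<subseteq> sets M"
  using gen_R by (auto intro: sigma_sets.Basic)

text \<open>Inside a set \<open>R\<^sub>0 \<in> R\<close> of finite measure, the sets with Poisson void probability form a
  monotone class containing the algebra \<open>{C \<in> R. C \<subseteq> R\<^sub>0}\<close>, which generates the trace \<sigma>-algebra.\<close>

lemma prob_avoiding_subset_finite:
  assumes R0: "R0 \<in> R" "emeasure M R0 < \<infinity>" and A: "A \<in> sets M" "A \<subseteq> R0"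
  shows "prob (avoiding M A) = exp_neg (emeasure M A)"
proof -
  interpret R: ring_of_sets "space M" R by (rule ring_R)
  define F where "F = {C \<in> R. C \<subseteq> R0}"
  define L where "L = {A \<in> sets M. A \<subseteq> R0 \<and> prob (avoiding M A) = exp_neg (emeasure M A)}"
  have R0M: "R0 \<in> sets M" using R0 R_sets by auto
  have L_fin: "emeasure M B < \<infinity>" if "B \<in> L" for B
    using that emeasure_mono[of B R0 M] R0M R0(2) unfolding L_def by auto
  have "sigma_sets R0 F \<subseteq> L"
  proof (rule monotone_class)
    show "algebra R0 F" unfolding algebra_iff_Un F_def using R0 by auto
    show "F \<subseteq> L" unfolding F_def L_def using R_sets voids_R by (auto simp: poisson_voids_def)
  next
    fix A :: "nat \<Rightarrow> 'a set" assume A: "range A \<subseteq> L" "incseq A"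
    then have "prob (avoiding M (\<Union>i. A i)) = exp_neg (emeasure M (\<Union>i. A i))"
      using L_fin[OF range_subsetD[OF A(1)]] by (intro prob_avoiding_UN_incseq) (auto simp: L_def)
    then show "(\<Union>i. A i) \<in> L" using A(1) unfolding L_def by blast
  next
    fix A :: "nat \<Rightarrow> 'a set" assume A: "range A \<subseteq> L" "decseq A"
    then have "prob (avoiding M (\<Inter>i. A i)) = exp_neg (emeasure M (\<Inter>i. A i))"
      using L_fin[OF range_subsetD[OF A(1)]] prob_Ncount_infinite_eq_0[OF ring_R R_sets D_R voids_R R0] R0M
      by (intro prob_avoiding_INT_decseq) (auto simp: L_def)
    then show "(\<Inter>i. A i) \<in> L" using A(1) unfolding L_def by blast
  qed
  moreover have "A \<in> sigma_sets R0 F"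
  proof -
    have "(\<inter>) R0 ` R = F" unfolding F_def using R0 by (auto intro!: image_eqI[where x=C for C])
    moreover have "A \<in> (\<inter>) R0 ` sigma_sets (space M) R" using A gen_R by auto
    ultimately show ?thesis
      using sigma_sets_Int[OF sigma_sets.Basic[OF R0(1)] R.sets_into_space[OF R0(1)]] by simp
  qed
  ultimately show ?thesis unfolding L_def by auto
qed

lemma poisson_voids_sets:
  assumes sfin: "\<exists>Rn :: nat \<Rightarrow> 'a set. range Rn \<subseteq> R \<and> (\<Union>n. Rn n) = space M \<and> (\<forall>n. emeasure M (Rn n) < \<infinity>)"
  shows "poisson_voids Q M (sets M)"
  unfolding poisson_voids_def
proof
  fix A assume A: "A \<in> sets M"
  interpret R: ring_of_sets "space M" R by (rule ring_R)
  from sfin obtain Rn :: "nat \<Rightarrow> 'a set"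
    where Rn: "range Rn \<subseteq> R" "(\<Union>n. Rn n) = space M" "\<And>n. emeasure M (Rn n) < \<infinity>" by blast
  define Rc where "Rc n = (\<Union>i\<le>n. Rn i)" for n
  have Rc: "Rc n \<in> R" for n unfolding Rc_def using Rn(1) by auto
  have Rc_fin: "emeasure M (Rc n) < \<infinity>" for n
  proof -
    have "emeasure M (Rc n) \<le> (\<Sum>i\<le>n. emeasure M (Rn i))"
      unfolding Rc_def using Rn(1) R_sets by (intro emeasure_subadditive_finite) auto
    also have "\<dots> < \<infinity>" using Rn(3) by (simp add: less_top)
    finally show ?thesis .
  qed
  define An where "An n = A \<inter> Rc n" for n
  have RcM: "Rc n \<in> sets M" for n using Rc R_sets by auto
  have An: "range An \<subseteq> sets M" "incseq An"
    using A RcM unfolding An_def Rc_def incseq_def by (auto intro: order_trans)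
  have An_fin: "emeasure M (An n) < \<infinity>" for n
    using emeasure_mono[of "An n" "Rc n" M] RcM[of n] Rc_fin[of n] unfolding An_def by auto
  have "(\<Union>n. An n) = A"
    using Rn(2) sets.sets_into_space[OF A] unfolding An_def Rc_def by blast
  moreover have "prob (avoiding M (An n)) = exp_neg (emeasure M (An n))" for n
    using An(1) by (intro prob_avoiding_subset_finite[OF Rc Rc_fin]) (auto simp: An_def)
  ultimately show "prob (avoiding M A) = exp_neg (emeasure M A)"
    using prob_avoiding_UN_incseq[OF An An_fin] by simp
qed

end

text \<open>Among these events are those of avoiding the cells of \<open>A\<close>.\<close>

lemma Ncount_vimage_in_sigma_avoiding:
  assumes A: "A \<in> sets M"
  shows "Ncount A -` B \<inter> space Q \<in> sigma_sets (space Q) {avoiding M C | C. C \<in> sets M \<and> C \<subseteq> A}"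
proof -
  define S where "S = sigma (space Q) {avoiding M C | C. C \<in> sets M \<and> C \<subseteq> A}"
  have "{avoiding M C | C. C \<in> sets M \<and> C \<subseteq> A} \<subseteq> Pow (space Q)"
    using avoiding_event sets.sets_into_space by blast
  then have sets_S: "sets S = sigma_sets (space Q) {avoiding M C | C. C \<in> sets M \<and> C \<subseteq> A}"
    and space_S: "space S = cr_sets M"
    unfolding S_def by (simp_all add: space_Q)
  have "avoiding M (cell M D A bs) \<in> sets S" for bs
    unfolding sets_S using cell_in_sets[OF A range_D] cell_subset[of M D A bs]
    by (intro sigma_sets.Basic) auto
  then have "Ncount A \<in> measurable S (count_space UNIV)"
    using sets.sets_into_space[OF A] by (intro measurable_Ncount_of_cells[OF space_S _ separating])
  then show ?thesis
    using measurable_sets[of "Ncount A" S "count_space UNIV" B] unfolding sets_S space_S space_Q by simp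
qed

lemma sums_prob_Ncount:
  assumes A: "A \<in> sets M" and s: "0 \<le> s" "s < 1"
  shows "(\<lambda>k. prob {X \<in> space Q. Ncount A X = enat k} * s ^ k) sums expectation (\<lambda>X. enat_pow s (Ncount A X))"
proof -
  define E where "E k = {X \<in> space Q. Ncount A X = enat k}" for k
  have E: "E k \<in> events" for k unfolding E_def by (rule Ncount_level_event[OF A])
  have disj: "disjoint_family E" unfolding disjoint_family_on_def E_def by auto
  have sum_E: "summable (\<lambda>k. prob (E k) * s ^ k)"
    using s by (intro summable_comparison_test'[OF summable_geometric[of s], where N=0])
      (auto simp: abs_mult mult_left_le_one_le)
  have "ennreal (enat_pow s (Ncount A X)) = (\<Sum>k. ennreal (s ^ k) * indicator (E k) X)"
    if "X \<in> space Q" for X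
  proof (cases "Ncount A X")
    case (enat j)
    then have "X \<in> E j" unfolding E_def using that by auto
    then show ?thesis using suminf_cmult_indicator[OF disj, of X j "\<lambda>k. ennreal (s ^ k)"] enat
      by (simp add: enat_pow_def)
  next
    case infinity
    then show ?thesis by (simp add: enat_pow_def E_def indicator_def)
  qed
  then have "ennreal (expectation (\<lambda>X. enat_pow s (Ncount A X)))
      = (\<integral>\<^sup>+X. (\<Sum>k. ennreal (s ^ k) * indicator (E k) X) \<partial>Q)"
    using integrable_enat_pow_Ncount[OF A] enat_pow_bounds[of s] s
    by (subst nn_integral_eq_integral[symmetric]) (auto intro!: nn_integral_cong)
  also have "\<dots> = (\<Sum>k. ennreal (prob (E k) * s ^ k))"
    using E by (subst nn_integral_suminf)
      (auto simp: nn_integral_cmult_indicator emeasure_eq_measure ennreal_mult'' mult.commute)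
  also have "\<dots> = ennreal (\<Sum>k. prob (E k) * s ^ k)"
    using sum_E s by (intro suminf_ennreal2) auto
  finally have "expectation (\<lambda>X. enat_pow s (Ncount A X)) = (\<Sum>k. prob (E k) * s ^ k)"
    using enat_pow_bounds[of s] s sum_E
    by (subst (asm) ennreal_inj) (auto intro!: integral_nonneg_AE suminf_nonneg)
  with sum_E show ?thesis unfolding E_def by (simp add: summable_sums)
qed

context
  assumes voids: "poisson_voids Q M (sets M)"
begin

lemma expectation_enat_pow_Ncount_sets:
  assumes "A \<in> sets M" "emeasure M A < \<infinity>" "0 \<le> s" "s < 1"
  shows "expectation (\<lambda>X. enat_pow s (Ncount A X)) = exp (- (1 - s) * enn2real (emeasure M A))"
  using expectation_enat_pow_Ncount[OF sets.ring_of_sets_axioms order_refl range_D voids assms] .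

text \<open>Both sides are power series in \<open>s\<close> with sum \<open>exp (-(1 - s) \<mu> A)\<close> on \<open>[0, 1)\<close>.\<close>

lemma prob_Ncount_eq_poisson:
  assumes A: "A \<in> sets M" "emeasure M A < \<infinity>"
  shows "prob {X \<in> space Q. Ncount A X = enat k}
    = exp (- enn2real (emeasure M A)) * enn2real (emeasure M A) ^ k / fact k"
proof -
  define m where "m = enn2real (emeasure M A)"
  define p where "p k = prob {X \<in> space Q. Ncount A X = enat k}" for k
  define q where "q k = exp (- m) * m ^ k / fact k" for k
  have q_sums: "(\<lambda>k. q k * s ^ k) sums exp (- (1 - s) * m)" for s
  proof -
    have "(\<lambda>k. exp (- m) * ((m * s) ^ k /\<^sub>R fact k)) sums (exp (- m) * exp (m * s))"
      by (intro sums_mult exp_converges)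
    then show ?thesis by (simp add: q_def power_mult_distrib field_simps exp_add[symmetric])
  qed
  have p_sums: "(\<lambda>k. p k * s ^ k) sums exp (- (1 - s) * m)" if "0 \<le> s" "s < 1" for s
    using sums_prob_Ncount[OF A(1) that] expectation_enat_pow_Ncount_sets[OF A that]
    unfolding p_def m_def by simp
  have "(\<lambda>k. (p k - q k) * s ^ k) sums 0" if "0 < s" "s < 1" for s
  proof -
    have "(\<lambda>k. p k * s ^ k - q k * s ^ k) sums (exp (- (1 - s) * m) - exp (- (1 - s) * m))"
      using p_sums q_sums that by (intro sums_diff) auto
    then show ?thesis by (simp add: left_diff_distrib)
  qed
  then have "p k - q k = 0" by (intro powser_zero_on_interval_imp_zero[of 1]) auto
  then show ?thesis unfolding p_def q_def m_def by simp
qed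

text \<open>For \<open>s > 0\<close>, \<open>enat_pow s N\<^sub>A\<close> vanishes only where \<open>N\<^sub>A = \<infinity>\<close>, and its expectation is at
  most \<open>exp (- \<mu> (A \<inter> R\<^sub>n) / 2) \<rightarrow> 0\<close> for an exhausting sequence \<open>R\<^sub>n\<close> of finite measure.\<close>

lemma prob_Ncount_infinite:
  assumes "sigma_finite_measure M" and A: "A \<in> sets M" "emeasure M A = \<infinity>"
  shows "prob {X \<in> space Q. Ncount A X = \<infinity>} = 1"
proof -
  obtain Rn where Rn: "range Rn \<subseteq> sets M" "(\<Union>i. Rn i) = space M"
    "\<And>i. emeasure M (Rn i) \<noteq> \<infinity>" "incseq Rn"
    using sigma_finite_measure.sigma_finite_incseq[OF assms(1)] by metis
  define An where "An n = A \<inter> Rn n" for n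
  have An: "An n \<in> sets M" for n unfolding An_def using A Rn(1) by auto
  have An_fin: "emeasure M (An n) \<noteq> \<infinity>" for n
    using emeasure_mono[of "An n" "Rn n" M] Rn(1) Rn(3)[of n] by (auto simp: An_def top_unique)
  have "incseq An" using Rn(4) by (auto simp: An_def incseq_def)
  moreover have "(\<Union>n. An n) = A" using Rn(2) sets.sets_into_space[OF A(1)] by (auto simp: An_def)
  ultimately have "(\<lambda>n. emeasure M (An n)) \<longlonglongrightarrow> \<infinity>"
    using A(2) An by (metis Lim_emeasure_incseq image_subset_iff)
  then have "filterlim (\<lambda>n. (1/2) * enn2real (emeasure M (An n))) at_top sequentially"
    using filterlim_enn2real_at_top[OF _ An_fin]
    by (intro filterlim_tendsto_pos_mult_at_top[OF tendsto_const]) auto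
  then have lim: "(\<lambda>n. exp (- (1/2) * enn2real (emeasure M (An n)))) \<longlonglongrightarrow> 0"
    by (auto intro: filterlim_compose[OF exp_at_bot] filterlim_compose[OF filterlim_uminus_at_bot_at_top])
  define f where "f X = enat_pow (1/2) (Ncount A X)" for X
  have f: "0 \<le> f X \<and> f X \<le> 1" for X unfolding f_def by (rule enat_pow_bounds) auto
  have f_int: "integrable Q f" unfolding f_def by (rule integrable_enat_pow_Ncount[OF A(1)]) auto
  have "expectation f \<le> exp (- (1/2) * enn2real (emeasure M (An n)))" for n
  proof -
    have "expectation f \<le> expectation (\<lambda>X. enat_pow (1/2) (Ncount (An n) X))"
      using f_int integrable_enat_pow_Ncount[OF An] unfolding f_def
      by (intro integral_mono enat_pow_antimono Ncount_mono) (auto simp: An_def)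
    also have "\<dots> = exp (- (1/2) * enn2real (emeasure M (An n)))"
      using expectation_enat_pow_Ncount_sets[of "An n" "1/2"] An An_fin by (simp add: less_top)
    finally show ?thesis .
  qed
  then have "expectation f \<le> 0" using lim by (intro LIMSEQ_le_const) auto
  then have "expectation f = 0" using f by (simp add: antisym integral_nonneg_AE)
  then have "AE X in Q. f X = 0" using integral_nonneg_eq_0_iff_AE[OF f_int] f by auto
  then have "AE X in Q. Ncount A X = \<infinity>"
    by (rule eventually_mono) (auto simp: f_def enat_pow_def split: enat.splits)
  then show ?thesis using Ncount_level_event[OF A(1)] by (simp add: prob_Collect_eq_1)
qed

lemma poisson_law_Ncount:
  assumes "sigma_finite_measure M" and A: "A \<in> sets M"
  shows "poisson_law (distr Q (count_space UNIV) (Ncount A)) (emeasure M A)"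
proof -
  have "measure (distr Q (count_space UNIV) (Ncount A)) {k} = prob {X \<in> space Q. Ncount A X = k}" for k
    using measure_distr[OF random_variable_Ncount[OF A], of "{k}"] by (simp add: vimage_def Int_def conj_commute)
  then show ?thesis
    using prob_Ncount_infinite[OF assms] prob_Ncount_eq_poisson[OF A]
    unfolding poisson_law_def by (simp add: less_top)
qed

lemma indep_sets_avoiding_subsets:
  assumes disj: "disjoint_family_on A I"
  shows "indep_sets (\<lambda>i. {avoiding M C | C. C \<in> sets M \<and> C \<subseteq> A i}) I"
proof (rule indep_setsI)
  show "{avoiding M C | C. C \<in> sets M \<and> C \<subseteq> A i} \<subseteq> events" for i using avoiding_event by auto
  fix E J assume J: "J \<noteq> {}" "J \<subseteq> I" "finite J"
    and E: "\<forall>j\<in>J. E j \<in> {avoiding M C | C. C \<in> sets M \<and> C \<subseteq> A j}"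
  then have "\<forall>j\<in>J. \<exists>C. E j = avoiding M C \<and> C \<in> sets M \<and> C \<subseteq> A j" by blast
  then obtain C where "\<forall>j\<in>J. E j = avoiding M (C j) \<and> C j \<in> sets M \<and> C j \<subseteq> A j"
    by (rule bchoice[THEN exE])
  then have C: "\<And>j. j \<in> J \<Longrightarrow> E j = avoiding M (C j) \<and> C j \<in> sets M \<and> C j \<subseteq> A j" by blast
  have C_disj: "disjoint_family_on C J"
    unfolding disjoint_family_on_def
  proof (intro ballI impI)
    fix j k assume "j \<in> J" "k \<in> J" "j \<noteq> k"
    then have "A j \<inter> A k = {}" using disj J(2) unfolding disjoint_family_on_def by auto
    then show "C j \<inter> C k = {}" using C[OF \<open>j \<in> J\<close>] C[OF \<open>k \<in> J\<close>] by blast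
  qed
  have "(\<Inter>j\<in>J. E j) = space Q \<inter> (\<Inter>j\<in>J. avoiding M (C j))"
    using C J(1) by (auto simp: space_Q avoiding_def)
  also have "prob \<dots> = (\<Prod>j\<in>J. exp_neg (emeasure M (C j)))"
    using C C_disj J(3) by (intro prob_Inter_avoiding[OF voids]) auto
  also have "\<dots> = (\<Prod>j\<in>J. prob (E j))"
    using C voids by (intro prod.cong refl) (simp add: poisson_voids_def)
  finally show "prob (\<Inter>j\<in>J. E j) = (\<Prod>j\<in>J. prob (E j))" .
qed

lemma indep_vars_Ncount:
  assumes A: "\<And>i. i \<in> I \<Longrightarrow> A i \<in> sets M" and disj: "disjoint_family_on A I"
  shows "indep_vars (\<lambda>_. count_space UNIV) (\<lambda>i X. Ncount (A i) X) I"
proof -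
  let ?G = "\<lambda>i. {avoiding M C | C. C \<in> sets M \<and> C \<subseteq> A i}"
  have "Int_stable (?G i)" for i
    unfolding Int_stable_def
  proof (clarify, intro exI conjI)
    fix C C' assume "C \<in> sets M" "C \<subseteq> A i" "C' \<in> sets M" "C' \<subseteq> A i"
    then show "avoiding M C \<inter> avoiding M C' = avoiding M (C \<union> C')" "C \<union> C' \<in> sets M" "C \<union> C' \<subseteq> A i"
      by (auto simp: avoiding_def)
  qed
  then have "indep_sets (\<lambda>i. sigma_sets (space Q) (?G i)) I"
    by (rule indep_sets_sigma[OF indep_sets_avoiding_subsets[OF disj]])
  moreover have "{Ncount (A i) -` B \<inter> space Q | B. B \<in> sets (count_space UNIV)}
      \<subseteq> sigma_sets (space Q) (?G i)" if "i \<in> I" for i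
    using Ncount_vimage_in_sigma_avoiding[OF A[OF that]] by blast
  ultimately show ?thesis
    unfolding indep_vars_def2 using A random_variable_Ncount by (auto intro: indep_sets_mono_sets)
qed

end

end

lemma sigma_finite_measure_of_exhausting:
  fixes A :: "nat \<Rightarrow> 'a set"
  assumes "range A \<subseteq> sets M" "(\<Union>n. A n) = space M" "\<And>n. emeasure M (A n) < \<infinity>"
  shows "sigma_finite_measure M"
proof
  show "\<exists>B. countable B \<and> B \<subseteq> sets M \<and> \<Union> B = space M \<and> (\<forall>b\<in>B. emeasure M b \<noteq> \<infinity>)"
    using assms less_imp_neq[OF assms(3)] by (intro exI[of _ "range A"]) auto
qed

theorem corollary1p4:
  fixes M :: "'a measure" and P :: "'w measure" and R :: "'a set set" and \<pi> :: "'w \<Rightarrow> 'a set"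
  assumes diag: "{(x, x) | x. x \<in> space M} \<in> sets (M \<Otimes>\<^sub>M M)"
    and ring: "ring_of_sets (space M) R"
    and gen: "sigma_sets (space M) R = sets M"
    and sfin: "\<exists>Rn :: nat \<Rightarrow> 'a set. range Rn \<subseteq> R \<and> (\<Union>n. Rn n) = space M \<and> (\<forall>n. emeasure M (Rn n) < \<infinity>)"
    and nonatomic: "\<forall>x \<in> space M. emeasure M {x} = 0"
    and P: "prob_space P"
    and cr: "cr_set P M \<pi>"
    and void: "\<forall>A \<in> R. measure P {\<omega> \<in> space P. \<pi> \<omega> \<inter> A = {}} = exp_neg (emeasure M A)"
  shows "poisson_process P M \<pi>"
proof -
  have RM: "R \<subseteq> sets M" using gen by (auto intro: sigma_sets.Basic)
  obtain D where D: "range D \<subseteq> R" "separates_points (space M) D"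
    using separating_sequence_of_measurable_diagonal[OF diag gen] ring by (auto simp: ring_of_sets_iff)
  have \<pi>: "\<pi> \<in> measurable P (cr_space M)" using cr by (simp add: cr_set_def)
  define Q where "Q = distr P (cr_space M) \<pi>"
  interpret renyi_setting Q M D
    unfolding renyi_setting_def renyi_setting_axioms_def
    using prob_space.prob_space_distr[OF P \<pi>] D RM diag nonatomic by (auto simp: Q_def)
  have "poisson_voids Q M R"
    using void RM measure_distr_avoiding[OF \<pi>] by (auto simp: poisson_voids_def Q_def)
  then have voids: "poisson_voids Q M (sets M)" by (rule poisson_voids_sets[OF ring gen D(1) _ sfin])
  have "sigma_finite_measure M"
    using sfin RM by (metis sigma_finite_measure_of_exhausting order_trans)
  show ?thesis
    unfolding poisson_process_def Let_def Q_def[symmetric]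
  proof (intro conjI allI impI ballI)
    show "indep_vars (\<lambda>_. count_space UNIV) (\<lambda>i X. Ncount (A i) X) {..<n}"
      if "(\<forall>i<n. A i \<in> sets M) \<and> disjoint_family_on A {..<n}" for n and A :: "nat \<Rightarrow> 'a set"
      using that by (intro indep_vars_Ncount[OF voids]) auto
  qed (rule poisson_law_Ncount[OF voids \<open>sigma_finite_measure M\<close>])
qed

end
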